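(* Assume (A1), (A2), (A5) and (A6). Let $\psi(H):=1$ for all $H$. Then $\sigma_\psi^2>0$, i.e. $\mathbb E^\circ|\mathcal T|+\frac2\mu(\mathbb E^\circ e(\mathcal T))^2-\sum_{k\ge0}\frac1{p_k}(\mathbb E^\circ n_k(\mathcal T))^2>0$.
   Context: Setting: for each $n$ a degree sequence $(d_1,\dots,d_n)$ with $n_k:=|\{i:d_i=k\}|$ and $D_n$ with $P(D_n=k)=n_k/n$; (A1) there is a probability distribution $(p_k)_{k\ge0}$ with $n_k/n\to p_k$ for all $k$ and $\mu:=\sum_kkp_k\in(0,\infty)$, $D$ with $P(D=k)=p_k$; (A2) $E D_n\to\mu$; (A5) $ED(D-2)>0$; (A6) $p_1>0$ and $p_0+p_1<1$. $\mathcal T$ is the Galton–Watson tree whose root has offspring distribution $D$ and other vertices offspring distribution $\hat D-1$, $P(\hat D=k)=kp_k/\mu$, regarded as an unlabelled unrooted tree; $|T|$, $e(T)$, $n_k(T)$ are numbers of vertices, edges and vertices of degree $k$. $\mathbb E^\circ g(\mathcal T):=E(g(\mathcal T);|\mathcal T|<\infty)$; $\sigma_\psi^2:=\mathbb E^\circ(|\mathcal T|\psi(\mathcal T)^2)+\frac2\mu(\mathbb E^\circ(e(\mathcal T)\psi(\mathcal T)))^2-\sum_{k\ge0}\frac1{p_k}(\mathbb E^\circ(n_k(\mathcal T)\psi(\mathcal T)))^2$ with $0/0=0$. *)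

theory Defs
  imports "HOL-Analysis.Analysis"
begin

text \<open>The Galton--Watson tree restricted to the
event that it is finite is a random finite plane tree; the law of a specific
plane tree is the usual product formula. All functionals used below
(number of vertices, edges, vertices of a given degree in the unrooted tree)
are invariant under reordering and rerooting, so they are functionals of the
unlabelled unrooted tree.\<close>

datatype ptree = Node "ptree list"

definition mu :: "(nat \<Rightarrow> real) \<Rightarrow> real" where
  "mu p = (\<Sum>k. real k * p k)"

text \<open>Offspring distribution of non-root vertices: law of \<open>\<hat>D - 1\<close>.\<close>
definition qoff :: "(nat \<Rightarrow> real) \<Rightarrow> nat \<Rightarrow> real" where
  "qoff p j = real (j + 1) * p (j + 1) / mu p"

fun sub_w :: "(nat \<Rightarrow> real) \<Rightarrow> ptree \<Rightarrow> real" where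
  "sub_w p (Node ts) = qoff p (length ts) * prod_list (map (sub_w p) ts)"

fun gw_prob :: "(nat \<Rightarrow> real) \<Rightarrow> ptree \<Rightarrow> real" where
  "gw_prob p (Node ts) = p (length ts) * prod_list (map (sub_w p) ts)"

fun num_vertices :: "ptree \<Rightarrow> nat" where
  "num_vertices (Node ts) = 1 + sum_list (map num_vertices ts)"

fun num_edges :: "ptree \<Rightarrow> nat" where
  "num_edges (Node ts) = length ts + sum_list (map num_edges ts)"

text \<open>Number of non-root vertices of (unrooted) degree k: degree = children + 1.\<close>
fun count_sub :: "nat \<Rightarrow> ptree \<Rightarrow> nat" where
  "count_sub k (Node ts) = (if length ts + 1 = k then 1 else 0) + sum_list (map (count_sub k) ts)"

text \<open>Number of vertices of degree k; the root has degree = number of children.\<close>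
fun num_deg :: "nat \<Rightarrow> ptree \<Rightarrow> nat" where
  "num_deg k (Node ts) = (if length ts = k then 1 else 0) + sum_list (map (count_sub k) ts)"

text \<open>\<open>E\<degree> g(T) = E(g(T); |T| < \<infinity>)\<close>\<close>
definition Eo :: "(nat \<Rightarrow> real) \<Rightarrow> (ptree \<Rightarrow> real) \<Rightarrow> real" where
  "Eo p g = infsum (\<lambda>t. gw_prob p t * g t) UNIV"

definition sigma_sq :: "(nat \<Rightarrow> real) \<Rightarrow> (ptree \<Rightarrow> real) \<Rightarrow> real" where
  "sigma_sq p \<psi> =
     Eo p (\<lambda>t. real (num_vertices t) * (\<psi> t)\<^sup>2)
     + 2 / mu p * (Eo p (\<lambda>t. real (num_edges t) * \<psi> t))\<^sup>2
     - (\<Sum>k. 1 / p k * (Eo p (\<lambda>t. real (num_deg k t) * \<psi> t))\<^sup>2)"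

end

theory Submission
  imports Defs
begin

text \<open>
Decomposing a finite plane tree at its root turns every quantity into a power series evaluated at
\<open>\<xi>\<close>, the probability that the subtree of a non-root vertex is finite. It is a fixed point of
the generating function \<open>h\<close> of \<open>\<hat>D - 1\<close>, the limit of the masses \<open>h\<^sup>n(0)\<close> of the
trees of height less than \<open>n\<close>; supercriticality, which is (A5), gives \<open>0 < \<xi> < 1\<close> and
\<open>a = h'(\<xi>) < 1\<close>. With \<open>L = 1/(1 - a)\<close> one finds \<open>E\<degree>|T| = \<Sum> p\<^sub>k \<xi>\<^sup>k + \<mu>\<xi>\<^sup>2L\<close>,
\<open>E\<degree>e(T) = \<mu>\<xi>\<^sup>2L\<close> and \<open>E\<degree>n\<^sub>k(T) = p\<^sub>k \<xi>\<^sup>k (1 + kL)\<close>, so \<open>\<sigma>\<^sup>2\<close> is an explicit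
series \<open>\<Sum> p\<^sub>k V\<^sub>k\<close>. Adding multiples of the two vanishing series
\<open>\<Sum> k p\<^sub>k (\<xi>\<^sup>k - \<xi>\<^sup>2)\<close> and \<open>\<Sum> k p\<^sub>k \<xi>\<^sup>k (L(2 - k) - 1)\<close> turns the summands into
\<open>p\<^sub>k U(\<xi>, \<xi>\<^sup>k, L, k)\<close>, where \<open>U\<close> vanishes for \<open>k \<le> 2\<close> and is positive for \<open>k \<ge> 3\<close>;
as (A5) forces \<open>p\<^sub>k > 0\<close> for some \<open>k \<ge> 3\<close>, \<open>\<sigma>\<^sup>2 > 0\<close>.

Positivity of \<open>U\<close> is a polynomial inequality. As a quadratic in \<open>L - 1 \<ge> 0\<close> its coefficients are
concave in \<open>y = \<xi>\<^sup>k\<close>, so it suffices to check them at \<open>y = 0\<close> and at the upper bound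
\<open>\<xi>\<^sup>k \<le> 6 / (6 + 6kt + 3k(k-1)t\<^sup>2 + k(k-1)(k-2)t\<^sup>3)\<close>, \<open>\<xi> = 1/(1+t)\<close>, where they become
explicit polynomials in \<open>t\<close> and \<open>k - 3\<close>.
\<close>

section \<open>Sums of nonnegative families\<close>

lemma has_sum_product_nonneg:
  fixes f :: "'a \<Rightarrow> real" and g :: "'b \<Rightarrow> real"
  assumes f: "(f has_sum a) A" and g: "(g has_sum b) B"
    and fnn: "\<And>x. x\<in>A \<Longrightarrow> f x \<ge> 0" and gnn: "\<And>y. y\<in>B \<Longrightarrow> g y \<ge> 0"
  shows "((\<lambda>(x,y). f x * g y) has_sum (a*b)) (A \<times> B)"
proof -
  have inner: "((\<lambda>y. (\<lambda>(x,y). f x * g y) (x,y)) has_sum f x * b) B" if "x \<in> A" for x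
    using has_sum_cmult_right[OF g, of "f x"] by simp
  have outer: "((\<lambda>x. f x * b) has_sum a * b) A"
    using has_sum_cmult_left[OF f] .
  have summ: "(\<lambda>(x,y). f x * g y) summable_on Sigma A (\<lambda>_. B)"
    by (rule summable_on_SigmaI[OF inner]) (use outer has_sum_imp_summable fnn gnn in auto)
  show ?thesis
    using has_sum_SigmaI[OF inner outer summ] by simp
qed

definition lists_len :: "nat \<Rightarrow> 'a set \<Rightarrow> 'a list set" where
  "lists_len j A = {ts. length ts = j \<and> set ts \<subseteq> A}"

lemma lists_len_0: "lists_len 0 A = {[]}"
  by (auto simp: lists_len_def)

lemma lists_len_Suc: "lists_len (Suc j) A = (\<lambda>(t,ts). t # ts) ` (A \<times> lists_len j A)"
  unfolding lists_len_def
  by (auto simp: length_Suc_conv image_iff)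

lemma inj_on_case_Cons: "inj_on (\<lambda>(t,ts). t # ts) X"
  by (auto simp: inj_on_def)

lemma has_sum_prod_list:
  fixes w :: "'a \<Rightarrow> real"
  assumes w: "(w has_sum s) A" and wnn: "\<And>x. x\<in>A \<Longrightarrow> w x \<ge> 0"
  shows "((\<lambda>ts. prod_list (map w ts)) has_sum s ^ j) (lists_len j A)"
proof (induction j)
  case 0
  then show ?case by (simp add: lists_len_0 has_sum_finite_iff)
next
  case (Suc j)
  have nn: "prod_list (map w ts) \<ge> 0" if "ts \<in> lists_len j A" for ts
    using that wnn by (fastforce simp: lists_len_def intro!: prod_list_nonneg)
  have "((\<lambda>(t,ts). w t * prod_list (map w ts)) has_sum (s * s ^ j)) (A \<times> lists_len j A)"
    by (rule has_sum_product_nonneg[OF w Suc wnn nn])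
  then have "(((\<lambda>ts. prod_list (map w ts)) \<circ> (\<lambda>(t,ts). t # ts)) has_sum (s ^ Suc j)) (A \<times> lists_len j A)"
    by (simp add: o_def case_prod_unfold)
  then show ?case
    by (simp add: lists_len_Suc has_sum_reindex[OF inj_on_case_Cons])
qed

lemma has_sum_prod_list_sum_list:
  fixes w g :: "'a \<Rightarrow> real"
  assumes w: "(w has_sum s) A" and wnn: "\<And>x. x\<in>A \<Longrightarrow> w x \<ge> 0"
    and wg: "((\<lambda>x. w x * g x) has_sum c) A" and gnn: "\<And>x. x\<in>A \<Longrightarrow> g x \<ge> 0"
  shows "((\<lambda>ts. prod_list (map w ts) * sum_list (map g ts)) has_sum (real j * s ^ (j - 1) * c)) (lists_len j A)"
proof (induction j)
  case 0
  then show ?case by (simp add: lists_len_0 has_sum_finite_iff)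
next
  case (Suc j)
  have nn: "prod_list (map w ts) \<ge> 0" if "ts \<in> lists_len j A" for ts
    using that wnn by (fastforce simp: lists_len_def intro!: prod_list_nonneg)
  have nn2: "prod_list (map w ts) * sum_list (map g ts) \<ge> 0" if "ts \<in> lists_len j A" for ts
    using that gnn nn[OF that] by (fastforce simp: lists_len_def intro!: mult_nonneg_nonneg sum_list_nonneg)
  have wgnn: "w x * g x \<ge> 0" if "x \<in> A" for x using wnn gnn that by simp
  have h1: "((\<lambda>(t,ts). (w t * g t) * prod_list (map w ts)) has_sum (c * s ^ j)) (A \<times> lists_len j A)"
    by (rule has_sum_product_nonneg[OF wg has_sum_prod_list[OF w wnn] wgnn nn])
  have h2: "((\<lambda>(t,ts). w t * (prod_list (map w ts) * sum_list (map g ts))) has_sum (s * (real j * s ^ (j - 1) * c))) (A \<times> lists_len j A)"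
    by (rule has_sum_product_nonneg[OF w Suc wnn nn2])
  have eq: "c * s ^ j + s * (real j * s ^ (j - 1) * c) = real (Suc j) * s ^ (Suc j - 1) * c"
    by (cases j) (auto simp: algebra_simps)
  have h3: "((\<lambda>x. (\<lambda>(t,ts). (w t * g t) * prod_list (map w ts)) x + (\<lambda>(t,ts). w t * (prod_list (map w ts) * sum_list (map g ts))) x)
      has_sum (real (Suc j) * s ^ (Suc j - 1) * c)) (A \<times> lists_len j A)"
    using has_sum_add[OF h1 h2] by (simp only: eq)
  have "(((\<lambda>ts. prod_list (map w ts) * sum_list (map g ts)) \<circ> (\<lambda>(t,ts). t # ts)) has_sum (real (Suc j) * s ^ (Suc j - 1) * c)) (A \<times> lists_len j A)"
    using h3 by (rule has_sum_cong[THEN iffD1, rotated]) (auto simp: algebra_simps)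
  then show ?case
    by (simp add: lists_len_Suc has_sum_reindex[OF inj_on_case_Cons])
qed

lemma has_sum_le_subset:
  fixes f :: "'a \<Rightarrow> real"
  assumes "(f has_sum a) A" "(f has_sum b) B" "A \<subseteq> B" "\<And>x. x \<in> B \<Longrightarrow> f x \<ge> 0"
  shows "a \<le> b"
  by (rule has_sum_mono_neutral[OF assms(1,2)]) (use assms(3,4) in auto)

lemma sum_le_has_sum:
  fixes f :: "'a \<Rightarrow> real"
  assumes "finite F" "F \<subseteq> B" "(f has_sum b) B" "\<And>x. x \<in> B \<Longrightarrow> f x \<ge> 0"
  shows "sum f F \<le> b"
  using has_sum_le_subset[OF has_sum_finite[OF assms(1)] assms(3,2,4)] .

lemma sums_indicator_Suc:
  fixes f :: "nat \<Rightarrow> real"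
  shows "(\<lambda>j. f j * (if Suc j = k then 1 else 0)) sums (if k = 0 then 0 else f (k - 1))"
proof (cases k)
  case 0 then show ?thesis by (simp add: sums_zero)
next
  case (Suc k')
  have "(\<lambda>j. if j = k' then f j else 0) sums f k'" by (rule sums_single)
  then show ?thesis using Suc by (simp add: if_distrib cong: if_cong)
qed

section \<open>Plane trees\<close>

fun children :: "ptree \<Rightarrow> ptree list" where "children (Node ts) = ts"

definition node_set :: "ptree set \<Rightarrow> ptree set" where
  "node_set A = {Node ts | ts. set ts \<subseteq> A}"

lemma node_set_eq_image: "node_set A = (\<lambda>(j,ts). Node ts) ` (SIGMA j:UNIV. lists_len j A)"
  unfolding node_set_def lists_len_def by (auto simp: image_iff)

lemma inj_on_case_Node: "inj_on (\<lambda>(j,ts). Node ts) (SIGMA j:UNIV. lists_len j A)"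
  unfolding lists_len_def by (auto simp: inj_on_def)

(* Summing first over the children, which are independent given their number j:
   the root term e j contributes s ^ j * e j, the children's terms real j * s ^ (j - 1) * c. *)
lemma has_sum_node_set:
  fixes w g :: "ptree \<Rightarrow> real" and r e :: "nat \<Rightarrow> real"
  assumes w: "(w has_sum s) A" and wnn: "\<And>x. x\<in>A \<Longrightarrow> w x \<ge> 0"
    and wg: "((\<lambda>x. w x * g x) has_sum c) A" and gnn: "\<And>x. x\<in>A \<Longrightarrow> g x \<ge> 0"
    and rnn: "\<And>j. r j \<ge> 0" and enn: "\<And>j. e j \<ge> 0"
    and ser: "(\<lambda>j. r j * (s ^ j * e j + real j * s ^ (j - 1) * c)) sums S"
  shows "((\<lambda>t. r (length (children t)) * prod_list (map w (children t))
                * (e (length (children t)) + sum_list (map g (children t)))) has_sum S) (node_set A)"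
    (is "(?f has_sum S) _")
proof -
  define F where "F = (\<lambda>(j::nat,ts). r j * prod_list (map w ts) * (e j + sum_list (map g ts)))"
  have s_nn: "s \<ge> 0" using w wnn by (rule has_sum_nonneg)
  have c_nn: "c \<ge> 0" using wg by (rule has_sum_nonneg) (use wnn gnn in auto)
  have Fnn: "F (j,ts) \<ge> 0" if "ts \<in> lists_len j A" for j ts
    using that wnn gnn rnn enn unfolding F_def lists_len_def
    by (auto intro!: mult_nonneg_nonneg add_nonneg_nonneg prod_list_nonneg sum_list_nonneg wnn gnn)
  have inner: "((\<lambda>ts. F (j,ts)) has_sum r j * (s ^ j * e j + real j * s ^ (j - 1) * c)) (lists_len j A)" for j
  proof -
    have h1: "((\<lambda>ts. e j * prod_list (map w ts)) has_sum e j * s ^ j) (lists_len j A)"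
      by (rule has_sum_cmult_right[OF has_sum_prod_list[OF w wnn]])
    note h2 = has_sum_prod_list_sum_list[OF w wnn wg gnn, of j]
    have "((\<lambda>ts. r j * (e j * prod_list (map w ts) + prod_list (map w ts) * sum_list (map g ts))) has_sum
           r j * (e j * s ^ j + real j * s ^ (j - 1) * c)) (lists_len j A)"
      by (rule has_sum_cmult_right[OF has_sum_add[OF h1 h2]])
    then show ?thesis
      by (simp add: F_def algebra_simps)
  qed
  have outer: "((\<lambda>j. r j * (s ^ j * e j + real j * s ^ (j - 1) * c)) has_sum S) UNIV"
    by (rule sums_nonneg_imp_has_sum[OF ser]) (use rnn enn s_nn c_nn in auto)
  have summ: "F summable_on (SIGMA j:UNIV. lists_len j A)"
    by (rule summable_on_SigmaI[OF inner]) (use outer has_sum_imp_summable Fnn in auto)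
  have "(F has_sum S) (SIGMA j:UNIV. lists_len j A)"
    by (rule has_sum_SigmaI[OF inner outer summ])
  moreover have "(?f \<circ> (\<lambda>(j,ts). Node ts)) x = F x" if "x \<in> (SIGMA j:UNIV. lists_len j A)" for x
    using that by (auto simp: F_def lists_len_def)
  ultimately have "((?f \<circ> (\<lambda>(j,ts). Node ts)) has_sum S) (SIGMA j:UNIV. lists_len j A)"
    using has_sum_cong by blast
  then show ?thesis
    by (simp add: node_set_eq_image has_sum_reindex[OF inj_on_case_Node])
qed

lemma node_set_UNIV: "node_set UNIV = UNIV"
proof -
  have "t \<in> node_set UNIV" for t by (cases t) (auto simp: node_set_def)
  then show ?thesis by auto
qed

fun height_lt :: "nat \<Rightarrow> ptree set" where
  "height_lt 0 = {}"
| "height_lt (Suc n) = node_set (height_lt n)"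

lemma node_set_mono: "A \<subseteq> B \<Longrightarrow> node_set A \<subseteq> node_set B"
  unfolding node_set_def by blast

lemma height_lt_Suc_mono: "height_lt n \<subseteq> height_lt (Suc n)"
  by (induction n) (auto intro: node_set_mono[THEN subsetD])

lemma height_lt_mono: "m \<le> n \<Longrightarrow> height_lt m \<subseteq> height_lt n"
  using height_lt_Suc_mono by (rule lift_Suc_mono_le)

lemma ex_height_lt: "\<exists>n. t \<in> height_lt n"
proof (induction t)
  case (Node ts)
  then have "\<forall>t\<in>set ts. \<exists>n. t \<in> height_lt n" by simp
  then obtain f where f: "\<And>t. t \<in> set ts \<Longrightarrow> t \<in> height_lt (f t)" by metis
  define n where "n = Max (insert 0 (f ` set ts))"
  have "t \<in> height_lt n" if "t \<in> set ts" for t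
    using f[OF that] height_lt_mono[of "f t" n] that unfolding n_def by auto
  then have "Node ts \<in> height_lt (Suc n)" by (auto simp: node_set_def)
  then show ?case by blast
qed

lemma finite_subset_height_lt: "finite X \<Longrightarrow> \<exists>n. X \<subseteq> height_lt n"
proof (induction X rule: finite_induct)
  case empty then show ?case by auto
next
  case (insert x F)
  then obtain n where n: "F \<subseteq> height_lt n" by blast
  obtain m where m: "x \<in> height_lt m" using ex_height_lt by blast
  have "insert x F \<subseteq> height_lt (max n m)"
    using n m height_lt_mono[of n "max n m"] height_lt_mono[of m "max n m"] by auto
  then show ?case by blast
qed

lemma summable_on_UNIV_if_bounded_on_height_lt:
  fixes f :: "ptree \<Rightarrow> real"
  assumes f_nonneg: "\<And>t. 0 \<le> f t" and bounded: "\<And>n. \<exists>c\<le>B. (f has_sum c) (height_lt n)"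
  shows "f summable_on UNIV"
proof (rule nonneg_bdd_above_summable_on)
  show "bdd_above (sum f ` {F. F \<subseteq> UNIV \<and> finite F})"
  proof (rule bdd_aboveI2)
    fix F :: "ptree set" assume "F \<in> {F. F \<subseteq> UNIV \<and> finite F}"
    then have F: "finite F" by auto
    then obtain n where n: "F \<subseteq> height_lt n" using finite_subset_height_lt by blast
    obtain c where "c \<le> B" "(f has_sum c) (height_lt n)" using bounded by blast
    then show "sum f F \<le> B" using sum_le_has_sum[OF F n] f_nonneg by fastforce
  qed
qed (use f_nonneg in auto)

lemma of_nat_sum_list_map: "real (sum_list (map f ts)) = sum_list (map (\<lambda>t. real (f t)) ts)"
  by (induction ts) auto

lemma count_sub_le_num_vertices: "count_sub k t \<le> num_vertices t"
proof (induction t)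
  case (Node ts)
  have "sum_list (map (count_sub k) ts) \<le> sum_list (map num_vertices ts)"
    by (rule sum_list_mono) (use Node in auto)
  then show ?case by simp
qed

lemma num_edges_Suc: "num_edges t + 1 = num_vertices t"
proof (induction t)
  case (Node ts)
  have "sum_list (map num_vertices ts) = sum_list (map num_edges ts) + length ts"
    using Node.IH by (induction ts) auto
  then show ?case by simp
qed

section \<open>Elementary power inequalities\<close>

lemma one_minus_power_ge:
  fixes x :: real assumes "0 \<le> x" "x \<le> 1"
  shows "real j * x ^ (j - 1) * (1 - x) \<le> 1 - x ^ j"
proof -
  have "(\<Sum>i<j. x ^ (j - 1)) \<le> (\<Sum>i<j. x ^ i)"
    by (rule sum_mono) (use assms in \<open>auto intro!: power_decreasing\<close>)
  then have "real j * x ^ (j - 1) \<le> (\<Sum>i<j. x ^ i)" by simp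
  then have "real j * x ^ (j - 1) * (1 - x) \<le> (\<Sum>i<j. x ^ i) * (1 - x)"
    using assms by (intro mult_right_mono) auto
  also have "\<dots> = 1 - x ^ j" by (simp add: one_diff_power_eq mult.commute)
  finally show ?thesis .
qed

lemma one_minus_power_gt:
  fixes x :: real assumes "0 \<le> x" "x < 1" "2 \<le> j"
  shows "real j * x ^ (j - 1) * (1 - x) < 1 - x ^ j"
proof -
  have "(\<Sum>i<j. x ^ (j - 1)) < (\<Sum>i<j. x ^ i)"
  proof (rule sum_strict_mono_ex1)
    show "\<forall>i\<in>{..<j}. x ^ (j - 1) \<le> x ^ i" using assms by (auto intro!: power_decreasing)
    show "\<exists>i\<in>{..<j}. x ^ (j - 1) < x ^ i"
      using assms by (intro bexI[of _ 0]) (auto simp: power_less_one_iff)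
  qed auto
  then have "real j * x ^ (j - 1) < (\<Sum>i<j. x ^ i)" by simp
  then have "real j * x ^ (j - 1) * (1 - x) < (\<Sum>i<j. x ^ i) * (1 - x)"
    using assms by (intro mult_strict_right_mono) auto
  also have "\<dots> = 1 - x ^ j" by (simp add: one_diff_power_eq mult.commute)
  finally show ?thesis .
qed

lemma one_minus_power_ge_quadratic:
  fixes s :: real assumes "0 \<le> s" "s \<le> 1"
  shows "(1 - s) * (real j - (1 - s) * (\<Sum>i<j. real i)) \<le> 1 - s ^ j"
proof -
  have "1 - real i * (1 - s) \<le> s ^ i" for i
    using Bernoulli_inequality[of "s - 1" i] assms by (simp add: algebra_simps)
  then have "(\<Sum>i<j. 1 - real i * (1 - s)) \<le> (\<Sum>i<j. s ^ i)"
    by (rule sum_mono)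
  then have "real j - (1 - s) * (\<Sum>i<j. real i) \<le> (\<Sum>i<j. s ^ i)"
    by (simp add: sum_subtractf sum_distrib_left mult.commute)
  then have "(1 - s) * (real j - (1 - s) * (\<Sum>i<j. real i)) \<le> (1 - s) * (\<Sum>i<j. s ^ i)"
    using assms by (intro mult_left_mono) auto
  also have "\<dots> = 1 - s ^ j" by (simp add: one_diff_power_eq)
  finally show ?thesis .
qed

section \<open>The probability that a subtree is finite\<close>

definition qgf :: "(nat \<Rightarrow> real) \<Rightarrow> real \<Rightarrow> real" where
  "qgf p s = (\<Sum>j. qoff p j * s ^ j)"

definition qgf_deriv :: "(nat \<Rightarrow> real) \<Rightarrow> real \<Rightarrow> real" where
  "qgf_deriv p s = (\<Sum>j. real j * qoff p j * s ^ (j - 1))"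

locale offspring_law =
  fixes p :: "nat \<Rightarrow> real"
  assumes p_nonneg: "\<And>k. p k \<ge> 0"
    and p_sum: "p sums 1"
    and mu_fin: "summable (\<lambda>k. real k * p k)"
    and mu_pos: "mu p > 0"
begin

lemma mu_sums: "(\<lambda>k. real k * p k) sums mu p"
  using mu_fin unfolding mu_def by (rule summable_sums)

lemma qoff_nonneg: "qoff p j \<ge> 0"
  unfolding qoff_def using p_nonneg mu_pos by auto

lemma shifted_mu_sums: "(\<lambda>j. real (j+1) * p (j+1)) sums mu p"
proof -
  have "(\<lambda>n. (\<lambda>k. real k * p k) (Suc n)) sums (mu p)"
    using mu_sums by (subst sums_Suc_iff) simp
  then show ?thesis by simp
qed

lemma qoff_sums: "qoff p sums 1"
proof -
  have "(\<lambda>j. real (j+1) * p (j+1) / mu p) sums (mu p / mu p)"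
    by (rule sums_divide[OF shifted_mu_sums])
  then show ?thesis using mu_pos by (simp add: qoff_def[abs_def])
qed

lemma qoff_summable: "summable (qoff p)" using qoff_sums by (simp add: sums_iff)

lemma sub_w_nonneg: "sub_w p t \<ge> 0"
proof (induction t)
  case (Node ts)
  then show ?case using qoff_nonneg by (auto intro!: mult_nonneg_nonneg prod_list_nonneg)
qed

lemma qgf_summable: assumes "0 \<le> s" "s \<le> 1" shows "summable (\<lambda>j. qoff p j * s ^ j)"
proof (rule summable_comparison_test'[OF qoff_summable])
  fix n show "norm (qoff p n * s ^ n) \<le> qoff p n"
    using assms qoff_nonneg by (auto simp: abs_mult intro!: mult_left_le power_le_one)
qed

lemma qgf_nonneg: assumes "0 \<le> s" "s \<le> 1" shows "0 \<le> qgf p s"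
  unfolding qgf_def using assms by (intro suminf_nonneg qgf_summable) (auto intro!: mult_nonneg_nonneg qoff_nonneg)

lemma has_sum_sub_w_node_set:
  assumes w: "(sub_w p has_sum s) A" and s: "0 \<le> s" "s \<le> 1"
  shows "(sub_w p has_sum qgf p s) (node_set A)"
proof -
  have ser: "(\<lambda>j. qoff p j * (s ^ j * 1 + real j * s ^ (j - 1) * 0)) sums qgf p s"
    unfolding qgf_def using qgf_summable[OF s] by (simp add: summable_sums)
  have "((\<lambda>t. qoff p (length (children t)) * prod_list (map (sub_w p) (children t)) * (1 + sum_list (map (\<lambda>_. 0) (children t))))
           has_sum qgf p s) (node_set A)"
    by (rule has_sum_node_set[OF w _ _ _ qoff_nonneg _ ser]) (auto simp: sub_w_nonneg)
  then show ?thesis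
    by (rule has_sum_cong[THEN iffD1, rotated]) (auto simp: node_set_def)
qed

end

locale supercritical_law = offspring_law +
  assumes p1_pos: "p 1 > 0"
    and ex_p_pos_ge3: "\<exists>K\<ge>3. p K > 0"
    and qoff_mean_gt1: "\<exists>J. 1 < (\<Sum>j<J. real j * qoff p j)"
begin

lemma ex_qoff_pos: "\<exists>j\<ge>2. qoff p j > 0"
proof -
  obtain K where K: "K \<ge> 3" "p K > 0" using ex_p_pos_ge3 by blast
  then have "qoff p (K - 1) > 0" using mu_pos by (simp add: qoff_def)
  then show ?thesis using K by (intro exI[of _ "K - 1"]) auto
qed

lemma one_minus_qgf_sums: assumes "0 \<le> s" "s \<le> 1"
  shows "(\<lambda>j. qoff p j * (1 - s ^ j)) sums (1 - qgf p s)"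
proof -
  have "(\<lambda>j. qoff p j - qoff p j * s ^ j) sums (1 - qgf p s)"
    unfolding qgf_def by (intro sums_diff qoff_sums summable_sums qgf_summable assms)
  then show ?thesis by (simp add: algebra_simps)
qed

lemma qgf_less_one: assumes "0 \<le> s" "s < 1" shows "qgf p s < 1"
proof -
  obtain j where j: "j \<ge> 2" "qoff p j > 0" using ex_qoff_pos by blast
  have "0 < (\<Sum>j. qoff p j * (1 - s ^ j))"
  proof (rule suminf_pos2)
    show "summable (\<lambda>j. qoff p j * (1 - s ^ j))" using one_minus_qgf_sums assms by (auto simp: sums_iff)
    show "0 \<le> qoff p n * (1 - s ^ n)" for n using assms qoff_nonneg by (auto intro!: mult_nonneg_nonneg power_le_one)
    show "0 < qoff p j * (1 - s ^ j)" using assms j by (auto intro!: mult_pos_pos simp: power_less_one_iff)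
  qed
  then show ?thesis using sums_unique[OF one_minus_qgf_sums[OF assms(1) less_imp_le[OF assms(2)]]] by auto
qed

lemma qgf_less_near_one: "\<exists>s0<1. \<forall>s. s0 \<le> s \<longrightarrow> s < 1 \<longrightarrow> qgf p s < s"
proof -
  (* a truncated mean of qoff p, finite even if the mean itself is infinite *)
  obtain J where J: "1 < (\<Sum>j<J. real j * qoff p j)" using qoff_mean_gt1 by blast
  define m where "m = (\<Sum>j<J. real j * qoff p j)"
  define c where "c = (\<Sum>j<J. qoff p j * (\<Sum>i<j. real i))"
  have c_nonneg: "0 \<le> c" unfolding c_def using qoff_nonneg by (auto intro!: sum_nonneg mult_nonneg_nonneg)
  define s0 where "s0 = max 0 (1 - (m - 1) / (c + 1))"
  have "qgf p s < s" if s: "s0 \<le> s" "s < 1" for s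
  proof -
    have s_nonneg: "0 \<le> s" using s unfolding s0_def by auto
    have "(1 - s) * (m - (1 - s) * c) = (1 - s) * m - ((1 - s) * (1 - s)) * c"
      by (simp add: algebra_simps)
    also have "\<dots> = (\<Sum>j<J. (1 - s) * (real j * qoff p j) - ((1 - s) * (1 - s)) * (qoff p j * (\<Sum>i<j. real i)))"
      unfolding m_def c_def by (simp only: sum_subtractf sum_distrib_left)
    also have "\<dots> = (\<Sum>j<J. qoff p j * ((1 - s) * (real j - (1 - s) * (\<Sum>i<j. real i))))"
      by (rule sum.cong) (simp_all add: algebra_simps)
    also have "\<dots> \<le> (\<Sum>j<J. qoff p j * (1 - s ^ j))"
      using s s_nonneg by (intro sum_mono mult_left_mono one_minus_power_ge_quadratic qoff_nonneg) auto
    also have "\<dots> \<le> (\<Sum>j. qoff p j * (1 - s ^ j))"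
      using one_minus_qgf_sums[of s] qoff_nonneg s s_nonneg
      by (intro sum_le_suminf) (auto simp: sums_iff intro!: mult_nonneg_nonneg power_le_one)
    also have "\<dots> = 1 - qgf p s"
      using sums_unique[OF one_minus_qgf_sums[of s]] s s_nonneg by simp
    finally have upper: "(1 - s) * (m - (1 - s) * c) \<le> 1 - qgf p s" .
    have "(1 - s) * (c + 1) \<le> m - 1"
      using s c_nonneg unfolding s0_def by (simp add: field_simps)
    then have "1 < m - (1 - s) * c" using s by (simp add: algebra_simps)
    then have "(1 - s) * 1 < (1 - s) * (m - (1 - s) * c)"
      using s by (intro mult_strict_left_mono) auto
    then have "1 - s < (1 - s) * (m - (1 - s) * c)" by simp
    with upper show ?thesis by linarith
  qed
  moreover have "s0 < 1" using J c_nonneg unfolding s0_def m_def by (auto simp: field_simps)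
  ultimately show ?thesis by blast
qed

definition mass_height_lt :: "nat \<Rightarrow> real" where "mass_height_lt n = infsum (sub_w p) (height_lt n)"

lemma mass_height_lt_props:
  "(sub_w p has_sum (mass_height_lt n)) (height_lt n) \<and> 0 \<le> mass_height_lt n \<and> mass_height_lt n < 1 \<and> mass_height_lt (Suc n) = qgf p (mass_height_lt n)"
proof (induction n)
  case 0
  have h: "(sub_w p has_sum 0) (height_lt 0)" by simp
  then have F0: "mass_height_lt 0 = 0" unfolding mass_height_lt_def by (rule infsumI)
  have "(sub_w p has_sum qgf p 0) (height_lt (Suc 0))" using has_sum_sub_w_node_set[OF h] by simp
  then show ?case using F0 h by (auto simp: mass_height_lt_def infsumI)
next
  case (Suc n)
  then have h: "(sub_w p has_sum (mass_height_lt (Suc n))) (height_lt (Suc n))"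
    using has_sum_sub_w_node_set[of "height_lt n" "mass_height_lt n"] by (auto simp: mass_height_lt_def infsumI)
  have nn: "0 \<le> mass_height_lt (Suc n)" using Suc qgf_nonneg by auto
  have lt: "mass_height_lt (Suc n) < 1" using Suc qgf_less_one by auto
  have "(sub_w p has_sum qgf p (mass_height_lt (Suc n))) (height_lt (Suc (Suc n)))"
    using has_sum_sub_w_node_set[OF h nn] lt by simp
  then have "mass_height_lt (Suc (Suc n)) = qgf p (mass_height_lt (Suc n))" unfolding mass_height_lt_def by (rule infsumI)
  then show ?case using h nn lt by auto
qed

lemma mass_height_lt_has_sum: "(sub_w p has_sum (mass_height_lt n)) (height_lt n)" using mass_height_lt_props by blast

lemma mass_height_lt_nonneg: "0 \<le> mass_height_lt n" using mass_height_lt_props by blast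

lemma mass_height_lt_less_one: "mass_height_lt n < 1" using mass_height_lt_props by blast

lemma mass_height_lt_Suc: "mass_height_lt (Suc n) = qgf p (mass_height_lt n)" using mass_height_lt_props by blast

lemma mass_height_lt_mono: "mass_height_lt n \<le> mass_height_lt (Suc n)"
  by (rule has_sum_le_subset[OF mass_height_lt_has_sum mass_height_lt_has_sum height_lt_Suc_mono]) (simp add: sub_w_nonneg)

lemma sum_le_mass_height_lt: assumes "finite X" "X \<subseteq> height_lt n" shows "sum (sub_w p) X \<le> mass_height_lt n"
  by (rule sum_le_has_sum[OF assms mass_height_lt_has_sum]) (simp add: sub_w_nonneg)

lemma sub_w_summable: "sub_w p summable_on UNIV"
proof (rule summable_on_UNIV_if_bounded_on_height_lt[where B = 1])
  show "\<exists>c\<le>1. (sub_w p has_sum c) (height_lt n)" for n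
    using mass_height_lt_has_sum mass_height_lt_less_one less_imp_le by blast
qed (rule sub_w_nonneg)

text \<open>\<open>sub_w p t\<close> is the probability that the subtree of a non-root vertex is the plane tree \<open>t\<close>,
so \<open>xi\<close> is the probability that this subtree is finite.\<close>

definition xi :: real where "xi = infsum (sub_w p) UNIV"

lemma xi_has_sum: "(sub_w p has_sum xi) UNIV"
  unfolding xi_def using sub_w_summable by (rule has_sum_infsum)

lemma less_xi_imp_less_mass: assumes "y < xi" shows "\<exists>n. y < mass_height_lt n"
proof -
  obtain F where F: "finite F" "dist (sum (sub_w p) F) xi \<le> (xi - y) / 2"
    using has_sum_finite_approximation[OF xi_has_sum, of "(xi - y)/2"] assms by auto
  obtain n where "F \<subseteq> height_lt n" using finite_subset_height_lt[OF F(1)] by blast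
  then have "sum (sub_w p) F \<le> mass_height_lt n" using sum_le_mass_height_lt F(1) by blast
  moreover have "xi + y \<le> 2 * sum (sub_w p) F" using F(2) unfolding dist_real_def
    by (auto simp: abs_if split: if_splits)
  ultimately have "y < mass_height_lt n" using assms by linarith
  then show ?thesis by blast
qed

lemma xi_le_one: "xi \<le> 1"
proof (rule ccontr)
  assume "\<not> xi \<le> 1"
  then obtain n where "1 < mass_height_lt n" using less_xi_imp_less_mass[of 1] by auto
  then show False using mass_height_lt_less_one[of n] by simp
qed

lemma xi_nonneg: "0 \<le> xi"
  using xi_has_sum by (rule has_sum_nonneg) (simp add: sub_w_nonneg)

lemma qgf_xi: "qgf p xi = xi"
proof -
  have "(sub_w p has_sum qgf p xi) UNIV"
    using has_sum_sub_w_node_set[OF xi_has_sum xi_nonneg xi_le_one] by (simp add: node_set_UNIV)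
  then show ?thesis using xi_has_sum has_sum_unique by blast
qed

lemma xi_pos: "0 < xi"
proof -
  have "sum (sub_w p) {Node []} \<le> xi"
    by (rule sum_le_has_sum[OF _ _ xi_has_sum]) (auto simp: sub_w_nonneg)
  moreover have "sub_w p (Node []) > 0" using p1_pos mu_pos by (simp add: qoff_def)
  ultimately show ?thesis by simp
qed

lemma xi_less_one: "xi < 1"
proof (rule ccontr)
  assume "\<not> xi < 1"
  then have xi1: "xi = 1" using xi_le_one by auto
  obtain s0 where s0: "s0 < 1" "\<And>s. s0 \<le> s \<Longrightarrow> s < 1 \<Longrightarrow> qgf p s < s" using qgf_less_near_one by blast
  obtain n where n: "s0 < mass_height_lt n" using less_xi_imp_less_mass[of s0] s0 xi1 by auto
  have "qgf p (mass_height_lt n) < mass_height_lt n" using s0(2)[of "mass_height_lt n"] n mass_height_lt_less_one by auto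
  then have "mass_height_lt (Suc n) < mass_height_lt n" by (simp add: mass_height_lt_Suc)
  then show False using mass_height_lt_mono[of n] by simp
qed

lemma mass_height_lt_le_xi: "mass_height_lt n \<le> xi"
  by (rule has_sum_le_subset[OF mass_height_lt_has_sum xi_has_sum]) (auto simp: sub_w_nonneg)

definition slope :: real where "slope = qgf_deriv p xi"

lemma qgf_deriv_summable: assumes "0 \<le> s" "s \<le> xi" shows "summable (\<lambda>j. real j * qoff p j * s ^ (j - 1))"
proof (rule summable_comparison_test'[of "\<lambda>j. qoff p j / (1 - xi)"])
  show "summable (\<lambda>j. qoff p j / (1 - xi))" by (intro summable_divide qoff_summable)
  fix n
  have x1: "0 \<le> xi" "xi \<le> 1" "xi < 1" using xi_nonneg xi_less_one by auto
  have "real n * qoff p n * s ^ (n - 1) \<le> real n * qoff p n * xi ^ (n - 1)"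
    using assms qoff_nonneg by (auto intro!: mult_left_mono power_mono)
  also have "\<dots> \<le> qoff p n * (1 - xi ^ n) / (1 - xi)"
  proof -
    have "real n * xi ^ (n - 1) \<le> (1 - xi ^ n) / (1 - xi)"
      using one_minus_power_ge[OF x1(1,2), of n] x1 by (simp add: pos_le_divide_eq)
    then have "qoff p n * (real n * xi ^ (n - 1)) \<le> qoff p n * ((1 - xi ^ n) / (1 - xi))"
      using qoff_nonneg by (rule mult_left_mono)
    then show ?thesis by (simp add: algebra_simps)
  qed
  also have "\<dots> \<le> qoff p n / (1 - xi)"
    using x1 qoff_nonneg[of n] by (intro divide_right_mono) (auto simp: mult_left_le)
  finally show "norm (real n * qoff p n * s ^ (n - 1)) \<le> qoff p n / (1 - xi)"
    using assms qoff_nonneg by simp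
qed

lemma qgf_deriv_sums: assumes "0 \<le> s" "s \<le> xi" shows "(\<lambda>j. real j * qoff p j * s ^ (j - 1)) sums qgf_deriv p s"
  unfolding qgf_deriv_def using qgf_deriv_summable[OF assms] by (rule summable_sums)

lemma qgf_deriv_le_slope: assumes "0 \<le> s" "s \<le> xi" shows "qgf_deriv p s \<le> slope"
proof -
  have "real j * qoff p j * s ^ (j - 1) \<le> real j * qoff p j * xi ^ (j - 1)" for j
    using assms qoff_nonneg[of j] by (intro mult_left_mono power_mono) auto
  then show ?thesis
    unfolding slope_def qgf_deriv_def using assms xi_nonneg by (intro suminf_le qgf_deriv_summable) auto
qed

lemma qgf_deriv_nonneg: assumes "0 \<le> s" "s \<le> xi" shows "0 \<le> qgf_deriv p s"
proof -
  have "0 \<le> real j * qoff p j * s ^ (j - 1)" for j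
    using assms qoff_nonneg[of j] by simp
  then show ?thesis unfolding qgf_deriv_def using assms by (intro suminf_nonneg qgf_deriv_summable) auto
qed

lemma slope_nonneg: "0 \<le> slope" unfolding slope_def using qgf_deriv_nonneg[of xi] xi_nonneg by simp

lemma slope_less_one: "slope < 1"
proof -
  (* strict convexity of qgf: slope * (1 - xi) < qgf p 1 - qgf p xi = 1 - xi *)
  have x1: "0 \<le> xi" "xi \<le> 1" "xi < 1" using xi_nonneg xi_less_one by auto
  obtain j0 where j0: "j0 \<ge> 2" "qoff p j0 > 0" using ex_qoff_pos by blast
  have "(\<lambda>j. real j * qoff p j * xi ^ (j - 1) * (1 - xi)) sums (slope * (1 - xi))"
    unfolding slope_def by (intro sums_mult2 qgf_deriv_sums x1) simp
  moreover have "(\<lambda>j. qoff p j * (1 - xi ^ j)) sums (1 - xi)"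
    using one_minus_qgf_sums[OF x1(1,2)] qgf_xi by simp
  ultimately have d: "(\<lambda>j. qoff p j * (1 - xi ^ j) - real j * qoff p j * xi ^ (j - 1) * (1 - xi)) sums (1 - xi - slope * (1 - xi))"
    by (rule sums_diff[rotated])
  have "0 < 1 - xi - slope * (1 - xi)"
    unfolding sums_unique[OF d]
  proof (rule suminf_pos2)
    show "summable (\<lambda>j. qoff p j * (1 - xi ^ j) - real j * qoff p j * xi ^ (j - 1) * (1 - xi))"
      using d by (simp add: sums_iff)
    show "0 \<le> qoff p n * (1 - xi ^ n) - real n * qoff p n * xi ^ (n - 1) * (1 - xi)" for n
      using mult_left_mono[OF one_minus_power_ge[OF x1(1,2), of n] qoff_nonneg[of n]] by (simp add: algebra_simps)
    show "0 < qoff p j0 * (1 - xi ^ j0) - real j0 * qoff p j0 * xi ^ (j0 - 1) * (1 - xi)"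
      using mult_strict_left_mono[OF one_minus_power_gt[OF x1(1,3) j0(1)] j0(2)] by (simp add: algebra_simps)
  qed
  then have "slope * (1 - xi) < 1 * (1 - xi)" by simp
  then show ?thesis using x1 by (simp add: mult_less_cancel_right)
qed

definition L :: real where "L = 1 / (1 - slope)"

lemma L_ge_one: "1 \<le> L" unfolding L_def using slope_nonneg slope_less_one by (simp add: field_simps)

lemma L_slope: "L * (1 - slope) = 1" unfolding L_def using slope_less_one by simp

end

section \<open>Expected size and degree counts\<close>

context supercritical_law
begin

lemma has_sum_size_node_set:
  assumes w: "(sub_w p has_sum s) A" and s: "0 \<le> s" "s \<le> xi"
    and c: "((\<lambda>t. sub_w p t * real (num_vertices t)) has_sum c) A"
  shows "((\<lambda>t. sub_w p t * real (num_vertices t)) has_sum (qgf p s + qgf_deriv p s * c)) (node_set A)"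
proof -
  have s1: "s \<le> 1" using s xi_le_one by linarith
  have ser: "(\<lambda>j. qoff p j * (s ^ j * 1 + real j * s ^ (j - 1) * c)) sums (qgf p s + qgf_deriv p s * c)"
  proof -
    have "(\<lambda>j. qoff p j * s ^ j + real j * qoff p j * s ^ (j - 1) * c) sums (qgf p s + qgf_deriv p s * c)"
      using qgf_summable[OF s(1) s1] unfolding qgf_def
      by (intro sums_add sums_mult2 qgf_deriv_sums s summable_sums)
    then show ?thesis by (simp add: algebra_simps)
  qed
  have "((\<lambda>t. qoff p (length (children t)) * prod_list (map (sub_w p) (children t)) * (1 + sum_list (map (\<lambda>t. real (num_vertices t)) (children t))))
           has_sum (qgf p s + qgf_deriv p s * c)) (node_set A)"
    by (rule has_sum_node_set[OF w _ c _ qoff_nonneg _ ser]) (auto simp: sub_w_nonneg)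
  then show ?thesis
    by (rule has_sum_cong[THEN iffD1, rotated]) (auto simp: node_set_def of_nat_sum_list_map)
qed

lemma size_mass_height_lt:
  "\<exists>c\<le>xi * L. ((\<lambda>t. sub_w p t * real (num_vertices t)) has_sum c) (height_lt n)"
proof (induction n)
  case 0
  show ?case using xi_nonneg L_ge_one by (intro exI[of _ 0]) auto
next
  case (Suc n)
  then obtain c where c: "c \<le> xi * L" "((\<lambda>t. sub_w p t * real (num_vertices t)) has_sum c) (height_lt n)"
    by blast
  define s where "s = mass_height_lt n"
  have s: "0 \<le> s" "s \<le> xi" unfolding s_def using mass_height_lt_nonneg mass_height_lt_le_xi by auto
  have c_nonneg: "0 \<le> c" using c(2) by (rule has_sum_nonneg) (simp add: sub_w_nonneg)
  have "qgf p s \<le> xi" using mass_height_lt_le_xi[of "Suc n"] by (simp add: s_def mass_height_lt_Suc)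
  moreover have "qgf_deriv p s * c \<le> slope * (xi * L)"
    using qgf_deriv_le_slope[OF s] qgf_deriv_nonneg[OF s] c c_nonneg by (intro mult_mono) auto
  moreover have "xi * L = xi * (L * (1 - slope)) + slope * (xi * L)" by (simp add: algebra_simps)
  ultimately have "qgf p s + qgf_deriv p s * c \<le> xi * L" by (simp add: L_slope)
  moreover have "((\<lambda>t. sub_w p t * real (num_vertices t)) has_sum (qgf p s + qgf_deriv p s * c)) (height_lt (Suc n))"
    using has_sum_size_node_set[OF mass_height_lt_has_sum s[unfolded s_def] c(2)] by (simp add: s_def)
  ultimately show ?case by blast
qed

lemma size_summable: "(\<lambda>t. sub_w p t * real (num_vertices t)) summable_on UNIV"
  by (rule summable_on_UNIV_if_bounded_on_height_lt[OF _ size_mass_height_lt]) (simp add: sub_w_nonneg)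

definition size_mass :: real where "size_mass = infsum (\<lambda>t. sub_w p t * real (num_vertices t)) UNIV"

lemma size_mass_has_sum: "((\<lambda>t. sub_w p t * real (num_vertices t)) has_sum size_mass) UNIV"
  unfolding size_mass_def using size_summable by (rule has_sum_infsum)

lemma size_mass_rec: "size_mass = xi + slope * size_mass"
proof -
  have "((\<lambda>t. sub_w p t * real (num_vertices t)) has_sum (qgf p xi + qgf_deriv p xi * size_mass)) UNIV"
    using has_sum_size_node_set[OF xi_has_sum xi_nonneg order_refl size_mass_has_sum] by (simp add: node_set_UNIV)
  then have "size_mass = qgf p xi + qgf_deriv p xi * size_mass" using size_mass_has_sum has_sum_unique by blast
  then show ?thesis by (simp add: qgf_xi slope_def)
qed

lemma size_mass_eq: "size_mass = xi * L"
  using size_mass_rec slope_less_one by (simp add: L_def field_simps)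

lemma deg_summable: "(\<lambda>t. sub_w p t * real (count_sub k t)) summable_on UNIV"
  by (rule summable_on_comparison_test[OF size_summable])
     (auto simp: sub_w_nonneg count_sub_le_num_vertices intro!: mult_left_mono)

definition deg_mass :: "nat \<Rightarrow> real" where "deg_mass k = infsum (\<lambda>t. sub_w p t * real (count_sub k t)) UNIV"

lemma deg_mass_has_sum: "((\<lambda>t. sub_w p t * real (count_sub k t)) has_sum deg_mass k) UNIV"
  unfolding deg_mass_def using deg_summable by (rule has_sum_infsum)

lemma deg_mass_rec: "deg_mass k = (if k = 0 then 0 else qoff p (k - 1) * xi ^ (k - 1)) + slope * deg_mass k"
proof -
  define e where "e = (\<lambda>j. if Suc j = k then 1 else (0::real))"
  have ser: "(\<lambda>j. qoff p j * (xi ^ j * e j + real j * xi ^ (j - 1) * deg_mass k)) sums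
        ((if k = 0 then 0 else qoff p (k - 1) * xi ^ (k - 1)) + slope * deg_mass k)"
  proof -
    have "(\<lambda>j. (qoff p j * xi ^ j) * e j + real j * qoff p j * xi ^ (j - 1) * deg_mass k) sums
        ((if k = 0 then 0 else qoff p (k - 1) * xi ^ (k - 1)) + slope * deg_mass k)"
      unfolding e_def slope_def
      by (intro sums_add sums_indicator_Suc[of "\<lambda>j. qoff p j * xi ^ j"] sums_mult2 qgf_deriv_sums xi_nonneg order_refl)
    then show ?thesis by (simp add: algebra_simps)
  qed
  have "((\<lambda>t. qoff p (length (children t)) * prod_list (map (sub_w p) (children t)) * (e (length (children t)) + sum_list (map (\<lambda>t. real (count_sub k t)) (children t))))
           has_sum ((if k = 0 then 0 else qoff p (k - 1) * xi ^ (k - 1)) + slope * deg_mass k)) (node_set UNIV)"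
    by (rule has_sum_node_set[OF xi_has_sum _ deg_mass_has_sum _ qoff_nonneg _ ser]) (auto simp: sub_w_nonneg e_def)
  moreover have "qoff p (length (children t)) * prod_list (map (sub_w p) (children t))
      * (e (length (children t)) + sum_list (map (\<lambda>t. real (count_sub k t)) (children t)))
      = sub_w p t * real (count_sub k t)" for t
    by (cases t) (simp add: e_def of_nat_sum_list_map)
  ultimately have "((\<lambda>t. sub_w p t * real (count_sub k t)) has_sum ((if k = 0 then 0 else qoff p (k - 1) * xi ^ (k - 1)) + slope * deg_mass k)) UNIV"
    by (simp add: node_set_UNIV)
  then show ?thesis using deg_mass_has_sum has_sum_unique by blast
qed

lemma deg_mass_eq: "deg_mass k = (if k = 0 then 0 else qoff p (k - 1) * xi ^ (k - 1) * L)"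
  using deg_mass_rec[of k] slope_less_one by (auto simp: L_def field_simps)

lemma mu_deg_mass: "mu p * xi * deg_mass k = real k * p k * xi ^ k * L"
  using mu_pos by (cases k) (simp_all add: deg_mass_eq qoff_def field_simps)

lemma has_sum_gw_prob_node:
  assumes g: "\<And>t. g t \<ge> 0" and c: "((\<lambda>t. sub_w p t * g t) has_sum c) UNIV"
    and e: "\<And>j. e j \<ge> 0"
    and ser: "(\<lambda>j. p j * (xi ^ j * e j + real j * xi ^ (j - 1) * c)) sums S"
    and F: "\<And>ts. F (Node ts) = gw_prob p (Node ts) * (e (length ts) + sum_list (map g ts))"
  shows "(F has_sum S) UNIV"
proof -
  have "((\<lambda>t. p (length (children t)) * prod_list (map (sub_w p) (children t)) * (e (length (children t)) + sum_list (map g (children t))))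
           has_sum S) (node_set UNIV)"
    by (rule has_sum_node_set[OF xi_has_sum _ c _ p_nonneg e ser]) (auto simp: sub_w_nonneg g)
  moreover have "p (length (children t)) * prod_list (map (sub_w p) (children t))
      * (e (length (children t)) + sum_list (map g (children t))) = F t" for t
    by (cases t) (simp add: F)
  ultimately show ?thesis by (simp add: node_set_UNIV)
qed

lemma pgf_xi_summable: "summable (\<lambda>j. p j * xi ^ j)"
proof (rule summable_comparison_test'[of p])
  show "summable p" using p_sum by (simp add: sums_iff)
  show "norm (p n * xi ^ n) \<le> p n" for n
    using p_nonneg[of n] xi_nonneg xi_le_one by (auto simp: abs_mult intro!: mult_left_le power_le_one)
qed

definition pgf_xi :: real where "pgf_xi = (\<Sum>j. p j * xi ^ j)"

lemma deriv_pgf_xi_sums: "(\<lambda>j. real j * p j * xi ^ (j - 1)) sums (mu p * xi)"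
proof -
  have "(\<lambda>n. mu p * (qoff p n * xi ^ n)) sums (mu p * qgf p xi)"
    unfolding qgf_def by (intro sums_mult summable_sums qgf_summable xi_nonneg xi_le_one)
  moreover have "mu p * (qoff p n * xi ^ n) = real (Suc n) * p (Suc n) * xi ^ (Suc n - 1)" for n
    using mu_pos by (simp add: qoff_def)
  ultimately have "(\<lambda>n. (\<lambda>j. real j * p j * xi ^ (j - 1)) (Suc n)) sums (mu p * xi)"
    by (simp add: qgf_xi)
  then show ?thesis by (subst (asm) sums_Suc_iff) simp
qed

lemma has_sum_gw_prob: "(gw_prob p has_sum pgf_xi) UNIV"
proof (rule has_sum_gw_prob_node[where g = "\<lambda>_. 0" and c = 0 and e = "\<lambda>_. 1"])
  show "(\<lambda>j. p j * (xi ^ j * 1 + real j * xi ^ (j - 1) * 0)) sums pgf_xi"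
    unfolding pgf_xi_def using pgf_xi_summable by (simp add: summable_sums)
qed auto

lemma has_sum_gw_size: "((\<lambda>t. gw_prob p t * real (num_vertices t)) has_sum (pgf_xi + mu p * xi * size_mass)) UNIV"
proof (rule has_sum_gw_prob_node[where g = "\<lambda>t. real (num_vertices t)" and c = size_mass and e = "\<lambda>_. 1"])
  have "(\<lambda>j. p j * xi ^ j + real j * p j * xi ^ (j - 1) * size_mass) sums (pgf_xi + mu p * xi * size_mass)"
    unfolding pgf_xi_def using pgf_xi_summable by (intro sums_add sums_mult2 deriv_pgf_xi_sums summable_sums)
  then show "(\<lambda>j. p j * (xi ^ j * 1 + real j * xi ^ (j - 1) * size_mass)) sums (pgf_xi + mu p * xi * size_mass)"
    by (simp add: algebra_simps)
qed (auto simp: size_mass_has_sum of_nat_sum_list_map)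

lemma has_sum_gw_deg: "((\<lambda>t. gw_prob p t * real (num_deg k t)) has_sum (p k * xi ^ k + mu p * xi * deg_mass k)) UNIV"
proof (rule has_sum_gw_prob_node[where g = "\<lambda>t. real (count_sub k t)" and c = "deg_mass k" and e = "\<lambda>j. if j = k then 1 else 0"])
  have "(\<lambda>j. (if j = k then p j * xi ^ j else 0) + real j * p j * xi ^ (j - 1) * deg_mass k) sums (p k * xi ^ k + mu p * xi * deg_mass k)"
    by (intro sums_add sums_single sums_mult2 deriv_pgf_xi_sums)
  moreover have "(\<lambda>j. p j * (xi ^ j * (if j = k then 1 else 0) + real j * xi ^ (j - 1) * deg_mass k)) =
      (\<lambda>j. (if j = k then p j * xi ^ j else 0) + real j * p j * xi ^ (j - 1) * deg_mass k)"
    by (auto simp: fun_eq_iff algebra_simps)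
  ultimately show "(\<lambda>j. p j * (xi ^ j * (if j = k then 1 else 0) + real j * xi ^ (j - 1) * deg_mass k)) sums (p k * xi ^ k + mu p * xi * deg_mass k)"
    by simp
qed (auto simp: deg_mass_has_sum of_nat_sum_list_map)

lemma Eo_size: "Eo p (\<lambda>t. real (num_vertices t)) = pgf_xi + mu p * xi\<^sup>2 * L"
proof -
  have "Eo p (\<lambda>t. real (num_vertices t)) = pgf_xi + mu p * xi * size_mass"
    unfolding Eo_def by (rule infsumI[OF has_sum_gw_size])
  then show ?thesis by (simp add: size_mass_eq power2_eq_square algebra_simps)
qed

lemma Eo_edges: "Eo p (\<lambda>t. real (num_edges t)) = mu p * xi\<^sup>2 * L"
proof -
  have edges: "real (num_edges t) = real (num_vertices t) - 1" for t
    using num_edges_Suc[of t] by linarith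
  have "((\<lambda>t. gw_prob p t * real (num_vertices t) + - gw_prob p t)
          has_sum (pgf_xi + mu p * xi * size_mass + - pgf_xi)) UNIV"
    using has_sum_gw_prob by (intro has_sum_add has_sum_gw_size) (simp add: has_sum_uminus)
  then have "((\<lambda>t. gw_prob p t * real (num_edges t)) has_sum (mu p * xi * size_mass)) UNIV"
    by (simp add: edges algebra_simps)
  then show ?thesis
    unfolding Eo_def by (simp add: infsumI size_mass_eq power2_eq_square algebra_simps)
qed

lemma Eo_deg: "Eo p (\<lambda>t. real (num_deg k t)) = p k * xi ^ k * (1 + real k * L)"
proof -
  have "Eo p (\<lambda>t. real (num_deg k t)) = p k * xi ^ k + mu p * xi * deg_mass k"
    unfolding Eo_def by (rule infsumI[OF has_sum_gw_deg])
  also have "\<dots> = p k * xi ^ k + real k * p k * xi ^ k * L" by (simp only: mu_deg_mass)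
  finally show ?thesis by (simp add: algebra_simps)
qed

lemma first_moment_xi_sums: "(\<lambda>k. real k * p k * xi ^ k) sums (mu p * xi^2)"
proof -
  have "(\<lambda>k. real k * p k * xi ^ (k - 1) * xi) sums (mu p * xi * xi)"
    by (intro sums_mult2 deriv_pgf_xi_sums)
  moreover have "(\<lambda>k. real k * p k * xi ^ (k - 1) * xi) = (\<lambda>k. real k * p k * xi ^ k)"
    by (simp add: fun_eq_iff power_eq_if mult.commute)
  ultimately show ?thesis by (simp add: power2_eq_square mult.assoc)
qed

lemma falling_moment_xi_sums: "(\<lambda>k. real k * (real k - 1) * p k * xi ^ k) sums (mu p * xi^2 * slope)"
proof -
  have eq: "mu p * xi^2 * (real n * qoff p n * xi ^ (n - 1))
      = real (Suc n) * (real (Suc n) - 1) * p (Suc n) * xi ^ (Suc n)" for n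
    using mu_pos by (cases n) (simp_all add: qoff_def power2_eq_square field_simps)
  have "(\<lambda>n. mu p * xi^2 * (real n * qoff p n * xi ^ (n - 1))) sums (mu p * xi^2 * slope)"
    unfolding slope_def by (intro sums_mult qgf_deriv_sums xi_nonneg order_refl)
  then have "(\<lambda>n. (\<lambda>k. real k * (real k - 1) * p k * xi ^ k) (Suc n)) sums (mu p * xi^2 * slope)"
    unfolding eq .
  then show ?thesis by (subst (asm) sums_Suc_iff) simp
qed

lemma second_moment_xi_sums: "(\<lambda>k. (real k)\<^sup>2 * p k * xi ^ k) sums (mu p * xi^2 * (1 + slope))"
proof -
  have "(\<lambda>k. real k * (real k - 1) * p k * xi ^ k + real k * p k * xi ^ k) sums (mu p * xi^2 * slope + mu p * xi^2)"
    by (intro sums_add falling_moment_xi_sums first_moment_xi_sums)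
  then show ?thesis by (simp add: power2_eq_square algebra_simps)
qed

end

section \<open>A polynomial inequality\<close>

definition coeff2 :: "real \<Rightarrow> real \<Rightarrow> real \<Rightarrow> real" where
  "coeff2 x y k = x^2 + (1 - k) * y + 2 * (k - 1) * x^2 * y - k * y^2"

definition coeff1 :: "real \<Rightarrow> real \<Rightarrow> real \<Rightarrow> real" where
  "coeff1 x y k = 5 * x^2 - 3 * x^3 + y * (5 - 5 * k + 3 * x + (9 * k - 6) * x^2) - 4 * (k + 1) * y^2"

definition coeff0 :: "real \<Rightarrow> real \<Rightarrow> real \<Rightarrow> real" where
  "coeff0 x y k = 2 * k * x^2 * (1 - x) + y * (1 + k / 2 + 2 * k * x - k * x^2 / 2 - 3 * k^2 / 2 + 5 * k^2 * x^2 / 2) - (k + 1)^2 * y^2"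

definition cubic_binom :: "real \<Rightarrow> real \<Rightarrow> real" where
  "cubic_binom m t = 6 + 6*(m+3)*t + 3*(m+3)*(m+2)*t^2 + (m+3)*(m+2)*(m+1)*t^3"

lemma cubic_binom_pos: "0 \<le> m \<Longrightarrow> 0 \<le> t \<Longrightarrow> 0 < cubic_binom m t"
  unfolding cubic_binom_def by (intro add_pos_nonneg) auto

definition coeff2_cleared :: "real \<Rightarrow> real \<Rightarrow> real" where
  "coeff2_cleared m t =
    (72 + 108 * m + 36 * m^2) * t
    + (144 + 252 * m + 126 * m^2 + 18 * m^3) * t^2
    + (144 + 300 * m + 210 * m^2 + 60 * m^3 + 6 * m^4) * t^3
    + (180 + 384 * m + 279 * m^2 + 84 * m^3 + 9 * m^4) * t^4
    + (144 + 408 * m + 444 * m^2 + 234 * m^3 + 60 * m^4 + 6 * m^5) * t^5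
    + (36 + 132 * m + 193 * m^2 + 144 * m^3 + 58 * m^4 + 12 * m^5 + m^6) * t^6"

definition coeff1_cleared :: "real \<Rightarrow> real \<Rightarrow> real" where
  "coeff1_cleared m t =
    (288 + 432 * m + 144 * m^2) * t
    + (648 + 1116 * m + 540 * m^2 + 72 * m^3) * t^2
    + (468 + 990 * m + 714 * m^2 + 216 * m^3 + 24 * m^4) * t^3
    + (576 + 1092 * m + 642 * m^2 + 132 * m^3 + 6 * m^4) * t^4
    + (1080 + 2430 * m + 1977 * m^2 + 762 * m^3 + 147 * m^4 + 12 * m^5) * t^5
    + (792 + 2304 * m + 2606 * m^2 + 1458 * m^3 + 416 * m^4 + 54 * m^5 + 2 * m^6) * t^6
    + (180 + 660 * m + 965 * m^2 + 720 * m^3 + 290 * m^4 + 60 * m^5 + 5 * m^6) * t^7"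

definition coeff0_cleared :: "real \<Rightarrow> real \<Rightarrow> real" where
  "coeff0_cleared m t =
    (432 + 792 * m + 432 * m^2 + 72 * m^3) * t
    + (648 + 1404 * m + 1044 * m^2 + 324 * m^3 + 36 * m^4) * t^2
    + (- 144 - 120 * m + 192 * m^2 + 252 * m^3 + 96 * m^4 + 12 * m^5) * t^3
    + (432 + 468 * m - 306 * m^2 - 516 * m^3 - 198 * m^4 - 24 * m^5) * t^4
    + (2160 + 5184 * m + 4584 * m^2 + 1914 * m^3 + 384 * m^4 + 30 * m^5) * t^5
    + (1800 + 5712 * m + 7266 * m^2 + 4770 * m^3 + 1710 * m^4 + 318 * m^5 + 24 * m^6) * t^6
    + (432 + 1728 * m + 2844 * m^2 + 2500 * m^3 + 1272 * m^4 + 376 * m^5 + 60 * m^6 + 4 * m^7) * t^7"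

lemma coeff2_cleared_eq:
  fixes t m :: real
  assumes "0 \<le> t" "0 \<le> m"
  shows "coeff2 (1 / (1 + t)) (6 / cubic_binom m t) (m + 3) * ((1 + t)^2 * (cubic_binom m t)^2) = coeff2_cleared m t"
proof -
  define D where "D = cubic_binom m t"
  have D: "D > 0" unfolding D_def using assms by (intro cubic_binom_pos)
  have t1: "1 + t > 0" using assms by auto
  define x where "x = 1 / (1 + t)"
  define y where "y = 6 / D"
  define X where "X = 1 + t"
  have xX: "x * X = 1" unfolding x_def X_def using t1 by simp
  have yD: "y * D = 6" unfolding y_def using D by simp
  have "coeff2 x y (m + 3) * (X^2 * D^2) = (x*X)^2 * D^2 + (1-(m+3))*(y*D)*X^2*D + 2*((m+3)-1)*(x*X)^2*(y*D)*D - (m+3)*(y*D)^2*X^2"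
    unfolding coeff2_def by algebra
  also have "\<dots> = D^2 + (1-(m+3))*6*X^2*D + 2*((m+3)-1)*6*D - (m+3)*36*X^2"
    by (simp add: xX yD)
  also have "\<dots> = coeff2_cleared m t"
    unfolding D_def cubic_binom_def X_def coeff2_cleared_def by algebra
  finally show ?thesis unfolding x_def y_def X_def D_def .
qed

lemma coeff1_cleared_eq:
  fixes t m :: real
  assumes "0 \<le> t" "0 \<le> m"
  shows "coeff1 (1 / (1 + t)) (6 / cubic_binom m t) (m + 3) * ((1 + t)^3 * (cubic_binom m t)^2) = coeff1_cleared m t"
proof -
  define D where "D = cubic_binom m t"
  have D: "D > 0" unfolding D_def using assms by (intro cubic_binom_pos)
  have t1: "1 + t > 0" using assms by auto
  define x where "x = 1 / (1 + t)"
  define y where "y = 6 / D"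
  define X where "X = 1 + t"
  define k where "k = m + 3"
  have xX: "x * X = 1" unfolding x_def X_def using t1 by simp
  have yD: "y * D = 6" unfolding y_def using D by simp
  have "coeff1 x y k * (X^3 * D^2) = 5*(x*X)^2*X*D^2 - 3*(x*X)^3*D^2 + (y*D)*(5-5*k)*X^3*D + 3*(x*X)*(y*D)*X^2*D + (9*k-6)*(x*X)^2*(y*D)*X*D - 4*(k+1)*(y*D)^2*X^3"
    unfolding coeff1_def by algebra
  also have "\<dots> = 5*X*D^2 - 3*D^2 + 6*(5-5*k)*X^3*D + 18*X^2*D + 6*(9*k-6)*X*D - 144*(k+1)*X^3"
    by (simp add: xX yD)
  also have "\<dots> = coeff1_cleared m t"
    unfolding D_def cubic_binom_def X_def coeff1_cleared_def k_def by algebra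
  finally show ?thesis unfolding x_def y_def X_def D_def k_def .
qed

lemma coeff0_cleared_eq:
  fixes t m :: real
  assumes "0 \<le> t" "0 \<le> m"
  shows "coeff0 (1 / (1 + t)) (6 / cubic_binom m t) (m + 3) * (2 * (1 + t)^3 * (cubic_binom m t)^2) = coeff0_cleared m t"
proof -
  define D where "D = cubic_binom m t"
  have D: "D > 0" unfolding D_def using assms by (intro cubic_binom_pos)
  have t1: "1 + t > 0" using assms by auto
  define x where "x = 1 / (1 + t)"
  define y where "y = 6 / D"
  define X where "X = 1 + t"
  define k where "k = m + 3"
  have xX: "x * X = 1" unfolding x_def X_def using t1 by simp
  have yD: "y * D = 6" unfolding y_def using D by simp
  have "coeff0 x y k * (2 * X^3 * D^2) = 4*k*(x*X)^2*X*D^2 - 4*k*(x*X)^3*D^2 + (y*D)*D*((2 + k - 3*k^2)*X^3 + 4*k*(x*X)*X^2 + (5*k^2 - k)*(x*X)^2*X) - 2*(k+1)^2*(y*D)^2*X^3"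
    unfolding coeff0_def by algebra
  also have "\<dots> = 4*k*X*D^2 - 4*k*D^2 + 6*D*((2 + k - 3*k^2)*X^3 + 4*k*X^2 + (5*k^2 - k)*X) - 72*(k+1)^2*X^3"
    by (simp add: xX yD)
  also have "\<dots> = coeff0_cleared m t"
    unfolding D_def cubic_binom_def X_def coeff0_cleared_def k_def by algebra
  finally show ?thesis unfolding x_def y_def X_def D_def k_def .
qed

lemma quadratic_nonneg:
  fixes a b c t :: real
  assumes "0 \<le> a" "0 \<le> c" "b^2 \<le> 4 * a * c"
  shows "0 \<le> a - b * t + c * t^2"
proof (cases "c = 0")
  case True
  then have "b^2 \<le> 0" using assms by simp
  then have "b^2 = 0" using zero_le_power2[of b] by linarith
  then have "b = 0" by simp
  then show ?thesis using True assms by simp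
next
  case False
  then have c: "c > 0" using assms by auto
  have "4 * c * (a - b * t + c * t^2) = (2 * c * t - b)^2 + (4 * a * c - b^2)"
    by (simp add: power2_eq_square algebra_simps)
  also have "\<dots> \<ge> 0" using assms by simp
  finally have "0 \<le> 4 * c * (a - b * t + c * t^2)" .
  then show ?thesis using c by (simp add: zero_le_mult_iff)
qed

lemma coeff2_cleared_nonneg:
  fixes t m :: real assumes "0 \<le> t" "0 \<le> m"
  shows "0 \<le> coeff2_cleared m t"
  unfolding coeff2_cleared_def using assms by (intro add_nonneg_nonneg mult_nonneg_nonneg zero_le_power) auto

lemma coeff1_cleared_nonneg:
  fixes t m :: real assumes "0 \<le> t" "0 \<le> m"
  shows "0 \<le> coeff1_cleared m t"
  unfolding coeff1_cleared_def using assms by (intro add_nonneg_nonneg mult_nonneg_nonneg zero_le_power) auto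

lemma coeff0_cleared_pos:
  fixes t m :: real assumes t: "0 < t" and m: "0 \<le> m"
  shows "0 < coeff0_cleared m t"
proof -
  define c1 where "c1 = 432 + 792 * m + 432 * m^2 + 72 * m^3"
  define c2 where "c2 = 648 + 1404 * m + 1044 * m^2 + 324 * m^3 + 36 * m^4"
  define n3 where "n3 = 144 + 120 * m"
  define c4 where "c4 = 432 + 468 * m"
  define c3 where "c3 = 192 * m^2 + 252 * m^3 + 96 * m^4 + 12 * m^5"
  define n4 where "n4 = 306 * m^2 + 516 * m^3 + 198 * m^4 + 24 * m^5"
  define c5 where "c5 = 2160 + 5184 * m + 4584 * m^2 + 1914 * m^3 + 384 * m^4 + 30 * m^5"
  define c6 where "c6 = 1800 + 5712 * m + 7266 * m^2 + 4770 * m^3 + 1710 * m^4 + 318 * m^5 + 24 * m^6"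
  define c7 where "c7 = 432 + 1728 * m + 2844 * m^2 + 2500 * m^3 + 1272 * m^4 + 376 * m^5 + 60 * m^6 + 4 * m^7"
  have eq: "coeff0_cleared m t
    = c1 * t + t^2 * (c2 - n3 * t + c4 * t^2) + t^3 * (c3 - n4 * t + c5 * t^2) + c6 * t^6 + c7 * t^7"
    unfolding coeff0_cleared_def c1_def c2_def n3_def c4_def c3_def n4_def c5_def c6_def c7_def by algebra
  have d1: "4 * c2 * c4 - n3^2 = 1099008 + 3604608 * m + 4417920 * m^2 + 2514240 * m^3 + 668736 * m^4 + 67392 * m^5"
    unfolding c2_def c4_def n3_def by algebra
  have d2: "4 * c3 * c5 - n4^2 = 1658880 * m^2 + 6158592 * m^3 + 9481788 * m^4 + 7869168 * m^5 + 3845880 * m^6 + 1146096 * m^7 + 205596 * m^8 + 20448 * m^9 + 864 * m^10"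
    unfolding c3_def c5_def n4_def by algebra
  have "0 \<le> 1099008 + 3604608 * m + 4417920 * m^2 + 2514240 * m^3 + 668736 * m^4 + 67392 * m^5"
    using m by (intro add_nonneg_nonneg mult_nonneg_nonneg zero_le_power) auto
  then have "n3^2 \<le> 4 * c2 * c4" using d1 by linarith
  moreover have "0 \<le> c2" "0 \<le> c4" using m unfolding c2_def c4_def by (intro add_nonneg_nonneg mult_nonneg_nonneg zero_le_power; simp)+
  ultimately have q1: "0 \<le> c2 - n3 * t + c4 * t^2" by (intro quadratic_nonneg) auto
  have "0 \<le> 1658880 * m^2 + 6158592 * m^3 + 9481788 * m^4 + 7869168 * m^5 + 3845880 * m^6 + 1146096 * m^7 + 205596 * m^8 + 20448 * m^9 + 864 * m^10"
    using m by (intro add_nonneg_nonneg mult_nonneg_nonneg zero_le_power) auto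
  then have "n4^2 \<le> 4 * c3 * c5" using d2 by linarith
  moreover have "0 \<le> c3" "0 \<le> c5" using m unfolding c3_def c5_def by (intro add_nonneg_nonneg mult_nonneg_nonneg zero_le_power; simp)+
  ultimately have q2: "0 \<le> c3 - n4 * t + c5 * t^2" by (intro quadratic_nonneg) auto
  have "0 < c1 * t" using t m unfolding c1_def by (intro mult_pos_pos add_pos_nonneg) auto
  moreover have "0 \<le> t^2 * (c2 - n3 * t + c4 * t^2)" using q1 by simp
  moreover have "0 \<le> t^3 * (c3 - n4 * t + c5 * t^2)" using q2 t by simp
  moreover have "0 \<le> c6 * t^6" using t m unfolding c6_def by (intro add_nonneg_nonneg mult_nonneg_nonneg zero_le_power) auto
  moreover have "0 \<le> c7 * t^7" using t m unfolding c7_def by (intro add_nonneg_nonneg mult_nonneg_nonneg zero_le_power) auto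
  ultimately show ?thesis unfolding eq by linarith
qed

lemma cubic_binom_le_power:
  fixes t :: real assumes t: "0 \<le> t"
  shows "6 + 6 * real K * t + 3 * real K * (real K - 1) * t^2 + real K * (real K - 1) * (real K - 2) * t^3 \<le> 6 * (1 + t)^K"
proof (induction K)
  case 0 then show ?case by simp
next
  case (Suc K)
  define n where "n = real K"
  have nn: "0 \<le> n * (n - 1) * (n - 2)"
  proof (cases "K \<ge> 2")
    case True then show ?thesis unfolding n_def by (intro mult_nonneg_nonneg) auto
  next
    case False then have "K = 0 \<or> K = 1" by auto
    then show ?thesis unfolding n_def by auto
  qed
  have "6 + 6 * (n + 1) * t + 3 * (n + 1) * n * t^2 + (n + 1) * n * (n - 1) * t^3
      = (1 + t) * (6 + 6 * n * t + 3 * n * (n - 1) * t^2 + n * (n - 1) * (n - 2) * t^3) - n * (n - 1) * (n - 2) * t^4"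
    by algebra
  also have "\<dots> \<le> (1 + t) * (6 + 6 * n * t + 3 * n * (n - 1) * t^2 + n * (n - 1) * (n - 2) * t^3)"
    using nn t by simp
  also have "\<dots> \<le> (1 + t) * (6 * (1 + t)^K)"
    using Suc t unfolding n_def by (intro mult_left_mono) auto
  finally show ?case unfolding n_def by (simp add: algebra_simps)
qed

lemma concave_quadratic_nonneg:
  fixes A0 A1 A2 y Y :: real
  assumes "0 \<le> A2" "0 \<le> A0" "0 < y" "y \<le> Y" "0 \<le> A0 + A1 * Y - A2 * Y^2"
  shows "0 \<le> A0 + A1 * y - A2 * y^2"
proof -
  have Y: "0 < Y" using assms by linarith
  have "Y * (A0 + A1 * y - A2 * y^2) = (Y - y) * A0 + y * (A0 + A1 * Y - A2 * Y^2) + A2 * y * Y * (Y - y)"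
    by algebra
  also have "\<dots> \<ge> 0" using assms Y by (intro add_nonneg_nonneg mult_nonneg_nonneg) auto
  finally show ?thesis using Y by (simp add: zero_le_mult_iff)
qed

lemma concave_quadratic_pos:
  fixes A0 A1 A2 y Y :: real
  assumes "0 \<le> A2" "0 \<le> A0" "0 < y" "y \<le> Y" "0 < A0 + A1 * Y - A2 * Y^2"
  shows "0 < A0 + A1 * y - A2 * y^2"
proof -
  have Y: "0 < Y" using assms by linarith
  have "Y * (A0 + A1 * y - A2 * y^2) = (Y - y) * A0 + y * (A0 + A1 * Y - A2 * Y^2) + A2 * y * Y * (Y - y)"
    by algebra
  moreover have "0 < y * (A0 + A1 * Y - A2 * Y^2)" using assms by simp
  moreover have "0 \<le> (Y - y) * A0 + A2 * y * Y * (Y - y)" using assms Y by (intro add_nonneg_nonneg mult_nonneg_nonneg) auto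
  ultimately have "0 < Y * (A0 + A1 * y - A2 * y^2)" by linarith
  then show ?thesis using Y by (simp add: zero_less_mult_iff)
qed

lemma coeffs_at_bound:
  fixes t m :: real
  assumes t: "0 < t" and m: "0 \<le> m"
  defines "x \<equiv> 1 / (1 + t)" and "Y \<equiv> 6 / cubic_binom m t"
  shows "0 \<le> coeff2 x Y (m + 3)" "0 \<le> coeff1 x Y (m + 3)" "0 < coeff0 x Y (m + 3)"
proof -
  have D: "0 < cubic_binom m t" using cubic_binom_pos m t by simp
  have t1: "0 < 1 + t" using t by simp
  have "0 \<le> coeff2 x Y (m + 3) * ((1 + t)^2 * (cubic_binom m t)^2)"
    using coeff2_cleared_eq[of t m] coeff2_cleared_nonneg[of t m] t m unfolding x_def Y_def by simp
  moreover have "0 < (1 + t)^2 * (cubic_binom m t)^2" using t1 D by simp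
  ultimately show "0 \<le> coeff2 x Y (m + 3)" by (auto simp: zero_le_mult_iff)
  have "0 \<le> coeff1 x Y (m + 3) * ((1 + t)^3 * (cubic_binom m t)^2)"
    using coeff1_cleared_eq[of t m] coeff1_cleared_nonneg[of t m] t m unfolding x_def Y_def by simp
  moreover have "0 < (1 + t)^3 * (cubic_binom m t)^2" using t1 D by simp
  ultimately show "0 \<le> coeff1 x Y (m + 3)" by (auto simp: zero_le_mult_iff)
  have "0 < coeff0 x Y (m + 3) * (2 * (1 + t)^3 * (cubic_binom m t)^2)"
    using coeff0_cleared_eq[of t m] coeff0_cleared_pos[of t m] t m unfolding x_def Y_def by simp
  moreover have "0 < 2 * (1 + t)^3 * (cubic_binom m t)^2" using t1 D by simp
  ultimately show "0 < coeff0 x Y (m + 3)" by (auto simp: zero_less_mult_iff)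
qed

lemma power_le_six_div_cubic_binom:
  fixes t :: real assumes t: "0 < t" and K: "3 \<le> K"
  shows "(1 / (1 + t)) ^ K \<le> 6 / cubic_binom (real K - 3) t"
proof -
  have D: "0 < cubic_binom (real K - 3) t" using cubic_binom_pos K t by simp
  have "cubic_binom (real K - 3) t \<le> 6 * (1 + t)^K"
    using cubic_binom_le_power[of t K] t K unfolding cubic_binom_def by (simp add: algebra_simps)
  then have "6 / (6 * (1 + t)^K) \<le> 6 / cubic_binom (real K - 3) t"
    using D by (intro divide_left_mono) auto
  then show ?thesis by (simp add: power_one_over)
qed

lemma coeffs_at_power:
  fixes x :: real and K :: nat
  assumes x: "0 < x" "x < 1" and K: "3 \<le> K"
  shows "0 \<le> coeff2 x (x^K) (real K)" "0 \<le> coeff1 x (x^K) (real K)" "0 < coeff0 x (x^K) (real K)"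
proof -
  define t where "t = 1 / x - 1"
  define Y where "Y = 6 / cubic_binom (real K - 3) t"
  have t: "0 < t" using x unfolding t_def by (simp add: field_simps)
  have xt: "1 / (1 + t) = x" unfolding t_def using x by simp
  have y0: "0 < x^K" using x by simp
  have yY: "x^K \<le> Y"
    using power_le_six_div_cubic_binom[OF t K] unfolding xt Y_def .
  note at_Y = coeffs_at_bound[OF t, of "real K - 3", unfolded xt, folded Y_def]
  have e2: "coeff2 x y k = x^2 + ((1 - k) + 2 * (k - 1) * x^2) * y - k * y^2" for y k
    unfolding coeff2_def by (simp add: algebra_simps)
  have e1: "coeff1 x y k = (5 * x^2 - 3 * x^3) + (5 - 5 * k + 3 * x + (9 * k - 6) * x^2) * y - (4 * (k + 1)) * y^2" for y k
    unfolding coeff1_def by (simp add: algebra_simps)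
  have e0: "coeff0 x y k = 2 * k * x^2 * (1 - x) + (1 + k / 2 + 2 * k * x - k * x^2 / 2 - 3 * k^2 / 2 + 5 * k^2 * x^2 / 2) * y - (k + 1)^2 * y^2" for y k
    unfolding coeff0_def by (simp add: algebra_simps)
  have "x^3 \<le> x^2" using x by (intro power_decreasing) auto
  then have c1: "0 \<le> 5 * x^2 - 3 * x^3" using zero_le_power2[of x] by linarith
  show "0 \<le> coeff2 x (x^K) (real K)"
    unfolding e2 by (rule concave_quadratic_nonneg[OF _ _ y0 yY]) (use at_Y K in \<open>auto simp: e2\<close>)
  show "0 \<le> coeff1 x (x^K) (real K)"
    unfolding e1 by (rule concave_quadratic_nonneg[OF _ _ y0 yY]) (use at_Y K c1 in \<open>auto simp: e1\<close>)
  show "0 < coeff0 x (x^K) (real K)"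
    unfolding e0 by (rule concave_quadratic_pos[OF _ _ y0 yY]) (use at_Y K x in \<open>auto simp: e0\<close>)
qed

text \<open>The first line is the summand of \<open>\<sigma>\<^sup>2\<close> obtained directly from the three expectations; the
other two are multiples of summands of the vanishing series \<open>\<Sum> k p\<^sub>k (\<xi>\<^sup>k - \<xi>\<^sup>2)\<close> and
\<open>\<Sum> k p\<^sub>k \<xi>\<^sup>k (L(2 - k) - 1)\<close>, with the factors chosen to make the result positive.\<close>

definition sigma_summand :: "real \<Rightarrow> real \<Rightarrow> real \<Rightarrow> real \<Rightarrow> real" where
  "sigma_summand x y L k = (y - y^2 + k * L * y * (1 - 2 * y) + L^2 * (2 * k * x^2 * y - k^2 * y^2))
     - ((2 * L^2 + L + 1 - (3 * L + 1) * x) / 2) * (k * (y - x^2))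
     + ((1 - x^2 + 2 * L - 4 * L * x^2) / 2) * (k * y * (L * (2 - k) - 1))"

lemma sigma_summand_quadratic: "sigma_summand x y L k = k * coeff2 x y k * (L - 1)^2 + (k / 2) * coeff1 x y k * (L - 1) + coeff0 x y k"
  unfolding sigma_summand_def coeff2_def coeff1_def coeff0_def by (simp add: field_simps) algebra

lemma sigma_summand_pos:
  fixes x L :: real and K :: nat
  assumes "0 < x" "x < 1" "3 \<le> K" "1 \<le> L"
  shows "0 < sigma_summand x (x^K) L (real K)"
proof -
  note P = coeffs_at_power[OF assms(1-3)]
  have "0 \<le> real K * coeff2 x (x^K) (real K) * (L - 1)^2" using P(1) by simp
  moreover have "0 \<le> (real K / 2) * coeff1 x (x^K) (real K) * (L - 1)" using P(2) assms(4) by simp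
  ultimately show ?thesis unfolding sigma_summand_quadratic using P(3) by linarith
qed

lemma sigma_summand_le_two:
  assumes "k \<le> 2" shows "sigma_summand x (x ^ k) L (real k) = 0"
proof -
  have "k = 0 \<or> k = 1 \<or> k = 2" using assms by auto
  then show ?thesis by (elim disjE) (simp_all add: sigma_summand_def field_simps power2_eq_square)
qed

lemma sigma_summand_nonneg:
  fixes x L :: real
  assumes "0 < x" "x < 1" "1 \<le> L"
  shows "0 \<le> sigma_summand x (x^k) L (real k)"
  using sigma_summand_pos[OF assms(1,2) _ assms(3), of k] sigma_summand_le_two[of k x L]
  by (cases "3 \<le> k") auto

section \<open>Positivity of the variance\<close>

context supercritical_law
begin

lemma deg_sq_summable: "summable (\<lambda>k. p k * (xi ^ k)\<^sup>2 * (1 + real k * L)\<^sup>2)"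
proof (rule summable_comparison_test')
  have "(\<lambda>k. p k * xi ^ k + 2 * L * (real k * p k * xi ^ k) + L\<^sup>2 * ((real k)\<^sup>2 * p k * xi ^ k))
      sums (pgf_xi + 2 * L * (mu p * xi\<^sup>2) + L\<^sup>2 * (mu p * xi\<^sup>2 * (1 + slope)))"
    unfolding pgf_xi_def
    by (intro sums_add sums_mult summable_sums pgf_xi_summable first_moment_xi_sums second_moment_xi_sums)
  then show "summable (\<lambda>k. p k * xi ^ k * (1 + real k * L)\<^sup>2)"
    by (simp add: sums_iff power2_eq_square algebra_simps)
  show "norm (p k * (xi ^ k)\<^sup>2 * (1 + real k * L)\<^sup>2) \<le> p k * xi ^ k * (1 + real k * L)\<^sup>2" for k
  proof -
    have x: "0 \<le> xi ^ k" "xi ^ k \<le> 1" using xi_nonneg xi_le_one by (simp_all add: power_le_one)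
    have "p k * xi ^ k * xi ^ k \<le> p k * xi ^ k"
      by (rule mult_left_le[OF x(2) mult_nonneg_nonneg[OF p_nonneg x(1)]])
    then have "p k * (xi ^ k)\<^sup>2 * (1 + real k * L)\<^sup>2 \<le> p k * xi ^ k * (1 + real k * L)\<^sup>2"
      by (intro mult_right_mono) (simp_all add: power2_eq_square)
    then show ?thesis using p_nonneg[of k] x by simp
  qed
qed

lemma sigma_sq_sums:
  "(\<lambda>k. p k * xi ^ k + (L + 2 * L\<^sup>2 * xi\<^sup>2) * (real k * p k * xi ^ k)
        - p k * (xi ^ k)\<^sup>2 * (1 + real k * L)\<^sup>2) sums sigma_sq p (\<lambda>_. 1)"
proof -
  (* when p k = 0 both sides vanish, since then 1 / p k = 0 in HOL *)
  have deg: "1 / p k * (Eo p (\<lambda>t. real (num_deg k t)))\<^sup>2 = p k * (xi ^ k)\<^sup>2 * (1 + real k * L)\<^sup>2" for k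
    by (cases "p k = 0") (simp_all add: Eo_deg power2_eq_square field_simps)
  define S where "S = (\<Sum>k. p k * (xi ^ k)\<^sup>2 * (1 + real k * L)\<^sup>2)"
  have "sigma_sq p (\<lambda>_. 1) = Eo p (\<lambda>t. real (num_vertices t))
          + 2 / mu p * (Eo p (\<lambda>t. real (num_edges t)))\<^sup>2 - (\<Sum>k. 1 / p k * (Eo p (\<lambda>t. real (num_deg k t)))\<^sup>2)"
    unfolding sigma_sq_def by simp
  also have "\<dots> = pgf_xi + mu p * xi\<^sup>2 * L + 2 / mu p * (mu p * xi\<^sup>2 * L)\<^sup>2 - S"
    unfolding S_def by (simp only: Eo_size Eo_edges deg)
  also have "\<dots> = pgf_xi + (L + 2 * L\<^sup>2 * xi\<^sup>2) * (mu p * xi\<^sup>2) - S"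
    using mu_pos by (simp add: power2_eq_square field_simps)
  finally have "sigma_sq p (\<lambda>_. 1) = pgf_xi + (L + 2 * L\<^sup>2 * xi\<^sup>2) * (mu p * xi\<^sup>2) - S" .
  moreover have "(\<lambda>k. p k * xi ^ k + (L + 2 * L\<^sup>2 * xi\<^sup>2) * (real k * p k * xi ^ k)
        - p k * (xi ^ k)\<^sup>2 * (1 + real k * L)\<^sup>2) sums (pgf_xi + (L + 2 * L\<^sup>2 * xi\<^sup>2) * (mu p * xi\<^sup>2)
          - S)"
    unfolding pgf_xi_def S_def
    by (intro sums_diff sums_add sums_mult summable_sums pgf_xi_summable first_moment_xi_sums deg_sq_summable)
  ultimately show ?thesis by simp
qed

lemma sigma_summand_sums: "(\<lambda>k. p k * sigma_summand xi (xi ^ k) L (real k)) sums sigma_sq p (\<lambda>_. 1)"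
proof -
  define l1 where "l1 = (2 * L\<^sup>2 + L + 1 - (3 * L + 1) * xi) / 2"
  define l2 where "l2 = (1 - xi\<^sup>2 + 2 * L - 4 * L * xi\<^sup>2) / 2"
  have zero1: "(\<lambda>k. real k * p k * xi ^ k - xi\<^sup>2 * (real k * p k)) sums 0"
    using sums_diff[OF first_moment_xi_sums sums_mult[OF mu_sums, of "xi\<^sup>2"]] by (simp add: mult.commute)
  have "(2 * L - 1) * (mu p * xi\<^sup>2) - L * (mu p * xi\<^sup>2 * (1 + slope)) = mu p * xi\<^sup>2 * (L * (1 - slope) - 1)"
    by (simp add: algebra_simps)
  then have vanish: "(2 * L - 1) * (mu p * xi\<^sup>2) - L * (mu p * xi\<^sup>2 * (1 + slope)) = 0"
    by (simp add: L_slope)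
  have zero2: "(\<lambda>k. (2 * L - 1) * (real k * p k * xi ^ k) - L * ((real k)\<^sup>2 * p k * xi ^ k)) sums 0"
    using sums_diff[OF sums_mult[OF first_moment_xi_sums, of "2 * L - 1"] sums_mult[OF second_moment_xi_sums, of L]]
    unfolding vanish .
  have "p k * sigma_summand xi (xi ^ k) L (real k) =
      (p k * xi ^ k + (L + 2 * L\<^sup>2 * xi\<^sup>2) * (real k * p k * xi ^ k) - p k * (xi ^ k)\<^sup>2 * (1 + real k * L)\<^sup>2)
      - l1 * (real k * p k * xi ^ k - xi\<^sup>2 * (real k * p k))
      + l2 * ((2 * L - 1) * (real k * p k * xi ^ k) - L * ((real k)\<^sup>2 * p k * xi ^ k))" for k
    unfolding sigma_summand_def l1_def l2_def by (simp add: field_simps power2_eq_square)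
  then have "(\<lambda>k. p k * sigma_summand xi (xi ^ k) L (real k)) sums (sigma_sq p (\<lambda>_. 1) - l1 * 0 + l2 * 0)"
    by (simp only:) (intro sums_add sums_diff sums_mult sigma_sq_sums zero1 zero2)
  then show ?thesis by simp
qed

lemma sigma_sq_pos: "0 < sigma_sq p (\<lambda>_. 1)"
proof -
  obtain K where K: "3 \<le> K" "p K > 0" using ex_p_pos_ge3 by blast
  have x: "0 < xi" "xi < 1" using xi_pos xi_less_one by auto
  have "0 < (\<Sum>k. p k * sigma_summand xi (xi ^ k) L (real k))"
  proof (rule suminf_pos2)
    show "summable (\<lambda>k. p k * sigma_summand xi (xi ^ k) L (real k))"
      using sigma_summand_sums by (rule sums_summable)
    show "0 \<le> p k * sigma_summand xi (xi ^ k) L (real k)" for k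
      using sigma_summand_nonneg[OF x L_ge_one] p_nonneg[of k] by simp
    show "0 < p K * sigma_summand xi (xi ^ K) L (real K)"
      using sigma_summand_pos[OF x K(1) L_ge_one] K(2) by simp
  qed
  then show ?thesis by (simp add: sums_unique[OF sigma_summand_sums, symmetric])
qed

end

section \<open>Consequences of assumption (A5)\<close>

lemma A5_imp_ex_p_pos:
  fixes p :: "nat \<Rightarrow> real"
  assumes p_nonneg: "\<And>k. p k \<ge> 0" and p1: "p 1 > 0"
    and A5: "\<not> summable (\<lambda>k. real k * (real k - 2) * p k) \<or> (\<Sum>k. real k * (real k - 2) * p k) > 0"
  shows "\<exists>K\<ge>3. p K > 0"
proof (rule ccontr)
  assume "\<not> (\<exists>K\<ge>3. p K > 0)"
  then have z: "p K = 0" if "3 \<le> K" for K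
    using that p_nonneg[of K] by force
  have eq: "(\<lambda>k. real k * (real k - 2) * p k) = (\<lambda>k. if k = 1 then - p 1 else 0)"
  proof
    fix k
    have "k = 0 \<or> k = 1 \<or> k = 2 \<or> 3 \<le> (k::nat)" by auto
    then show "real k * (real k - 2) * p k = (if k = 1 then - p 1 else 0)"
      using z[of k] by auto
  qed
  have "(\<lambda>k. if k = 1 then - p 1 else 0) sums (- p 1)"
    using sums_single[of 1 "\<lambda>_. - p 1"] by simp
  then have "(\<lambda>k. real k * (real k - 2) * p k) sums (- p 1)" unfolding eq .
  then show False using A5 p1 by (auto simp: sums_iff)
qed

lemma A5_imp_qoff_mean:
  fixes p :: "nat \<Rightarrow> real"
  assumes p_nonneg: "\<And>k. p k \<ge> 0" and mu_fin: "summable (\<lambda>k. real k * p k)" and mu_pos: "mu p > 0"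
    and A5: "\<not> summable (\<lambda>k. real k * (real k - 2) * p k) \<or> (\<Sum>k. real k * (real k - 2) * p k) > 0"
  shows "\<exists>J. 1 < (\<Sum>j<J. real j * qoff p j)"
proof (rule ccontr)
  assume "\<not> (\<exists>J. 1 < (\<Sum>j<J. real j * qoff p j))"
  then have bnd: "(\<Sum>j<J. real j * qoff p j) \<le> 1" for J by (meson not_le)
  define g where "g k = real k * (real k - 1) * p k" for k
  have gnn: "0 \<le> g k" for k
    unfolding g_def using p_nonneg[of k] by (cases k) auto
  have gS: "g (Suc j) = mu p * (real j * qoff p j)" for j
    unfolding g_def qoff_def using mu_pos by (simp add: field_simps)
  have part: "(\<Sum>k<n. g k) \<le> mu p" for n
  proof (cases n)
    case 0 then show ?thesis using mu_pos by simp
  next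
    case (Suc n')
    have "(\<Sum>k<n. g k) = g 0 + (\<Sum>j<n'. g (Suc j))" unfolding Suc by (rule sum.lessThan_Suc_shift)
    also have "\<dots> = mu p * (\<Sum>j<n'. real j * qoff p j)"
    proof -
      have g0: "g 0 = 0" by (simp add: g_def)
      show ?thesis by (simp only: g0 gS sum_distrib_left add_0)
    qed
    also have "\<dots> \<le> mu p * 1" using bnd[of n'] mu_pos by (intro mult_left_mono) auto
    finally show ?thesis by simp
  qed
  have sg: "summable g"
    by (rule bounded_imp_summable[of g "mu p"]) (use gnn part[of "Suc _"] in \<open>auto simp: lessThan_Suc_atMost\<close>)
  have gle: "suminf g \<le> mu p" by (rule suminf_le_const[OF sg part])
  have "(\<lambda>k. g k - real k * p k) sums (suminf g - mu p)"
    by (intro sums_diff summable_sums sg) (use mu_fin in \<open>simp add: mu_def summable_sums\<close>)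
  moreover have "(\<lambda>k. g k - real k * p k) = (\<lambda>k. real k * (real k - 2) * p k)"
    unfolding g_def by (auto simp: fun_eq_iff algebra_simps)
  ultimately have "(\<lambda>k. real k * (real k - 2) * p k) sums (suminf g - mu p)" by simp
  then show False using A5 gle by (auto simp: sums_iff)
qed

text \<open>Hypotheses (A1) and (A2) concern the degree sequence, which \<open>\<sigma>\<^sup>2\<close> does not depend on,
and \<open>p 0 + p 1 < 1\<close> is implied by (A5).\<close>

theorem lemma10p5:
  fixes d :: "nat \<Rightarrow> nat \<Rightarrow> nat" and p :: "nat \<Rightarrow> real"
  assumes p_nonneg: "\<And>k. p k \<ge> 0"
    and p_sum: "p sums 1"
    and mu_fin: "summable (\<lambda>k. real k * p k)"
    and mu_pos: "mu p > 0"
    and A1: "\<And>k. (\<lambda>n. real (card {i. i < n \<and> d n i = k}) / real n) \<longlonglongrightarrow> p k"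
    and A2: "(\<lambda>n. (\<Sum>i<n. real (d n i)) / real n) \<longlonglongrightarrow> mu p"
    and A5: "\<not> summable (\<lambda>k. real k * (real k - 2) * p k)
             \<or> (\<Sum>k. real k * (real k - 2) * p k) > 0"
    and A6: "p 1 > 0" "p 0 + p 1 < 1"
  shows "sigma_sq p (\<lambda>_. 1) > 0"
proof -
  interpret supercritical_law p
    using p_nonneg p_sum mu_fin mu_pos A6(1) A5_imp_ex_p_pos[OF p_nonneg A6(1) A5]
      A5_imp_qoff_mean[OF p_nonneg mu_fin mu_pos A5]
    by unfold_locales
  show ?thesis by (rule sigma_sq_pos)
qed

end
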